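(* For every $\mathrm{LTL}$ formula $\psi$ over $AP$ there is a $\mathrm{coSafeLTL}$ formula $\psi'$ over $AP$ such that for every pointed $\Sigma$-tree $(t,u)$: $(t,u)\models\mathsf{E}^f\psi$ if and only if $(t,u)\models\mathsf{E}\psi'$.
   Context: Fix a finite set $AP$ and $\Sigma=2^{AP}$. A $\Sigma$-tree is an unranked (finitely many children per node), unordered, leafless (every node has a child) tree with labelling $t(v)\in\Sigma$. A path is a finite or infinite sequence of nodes, each (after the first) a child of the previous. $\mathrm{LTL}$ formulae: $\psi ::= p\mid\neg\psi\mid\psi\lor\psi\mid\mathsf{X}\psi\mid\psi\,\mathsf{U}\,\psi\mid\psi\,\mathsf{R}\,\psi$ with $p\in AP$. $\mathrm{coSafeLTL}$ is the set of $\mathrm{LTL}$ formulae in negation normal form (negation only in front of atomic propositions) using only the temporal operators $\mathsf{X}$ and $\mathsf{U}$. An $\mathrm{LTL}$ formula is evaluated on $(t,\pi,i)$, $\pi$ a path, $i$ a position of $\pi$: $p$ iff $p\in t(\pi(i))$; Booleans as usual; $\mathsf{X}\psi$ iff $i$ is not the last position of $\pi$ and $\psi$ holds at $i+1$; $\psi_1\mathsf{U}\psi_2$ iff some position $j\ge i$ of $\pi$ satisfies $\psi_2$ and all $k\in[i,j)$ satisfy $\psi_1$; $\psi_1\mathsf{R}\psi_2$ iff all positions $j\ge i$ satisfy $\psi_2$ or some $j\ge i$ satisfies $\psi_1\land\psi_2$ and all $k\in[i,j)$ satisfy $\psi_2$. $(t,u)\models\mathsf{E}^f\psi$ iff there is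 a finite path $\pi$ starting at the root of $t$ with $\pi(i)=u$ for some $i$ and $(t,\pi,i)\models\psi$. $(t,u)\models\mathsf{E}\psi'$ iff there is an infinite path $\pi$ starting at the root of $t$ with $\pi(i)=u$ for some $i$ and $(t,\pi,i)\models\psi'$. *)

theory Defs
  imports Main "HOL-Library.Extended_Nat"
begin

text \<open>LTL formulae over atomic propositions of type 'a. Conjunction is included as a
Boolean connective (needed for negation normal form).\<close>
datatype 'a ltl =
    Prop 'a
  | Neg "'a ltl"
  | Or "'a ltl" "'a ltl"
  | And "'a ltl" "'a ltl"
  | Next "'a ltl"
  | Until "'a ltl" "'a ltl"
  | Release "'a ltl" "'a ltl"

fun cosafe :: "'a ltl \<Rightarrow> bool" where
  "cosafe (Prop p) = True"
| "cosafe (Neg (Prop p)) = True"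
| "cosafe (Neg _) = False"
| "cosafe (Or a b) = (cosafe a \<and> cosafe b)"
| "cosafe (And a b) = (cosafe a \<and> cosafe b)"
| "cosafe (Next a) = cosafe a"
| "cosafe (Until a b) = (cosafe a \<and> cosafe b)"
| "cosafe (Release a b) = False"

text \<open>Trees are represented by tree domains: prefix-closed sets of nat lists, the
children of w being the elements w @ [k].\<close>
definition is_tree :: "nat list set \<Rightarrow> bool" where
  "is_tree D \<longleftrightarrow> [] \<in> D \<and> (\<forall>w k. w @ [k] \<in> D \<longrightarrow> w \<in> D)
     \<and> (\<forall>w\<in>D. finite {k. w @ [k] \<in> D} \<and> {k. w @ [k] \<in> D} \<noteq> {})"

text \<open>A path from the root of length len (positions i < len; len = \<infinity> for infinite paths).\<close>
definition root_path :: "nat list set \<Rightarrow> (nat \<Rightarrow> nat list) \<Rightarrow> enat \<Rightarrow> bool" where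
  "root_path D \<pi> len \<longleftrightarrow> len \<ge> 1 \<and> \<pi> 0 = [] \<and>
     (\<forall>i. enat i < len \<longrightarrow> \<pi> i \<in> D) \<and>
     (\<forall>i. enat (Suc i) < len \<longrightarrow> (\<exists>k. \<pi> (Suc i) = \<pi> i @ [k]))"

primrec holds :: "(nat list \<Rightarrow> 'a set) \<Rightarrow> (nat \<Rightarrow> nat list) \<Rightarrow> enat \<Rightarrow> 'a ltl \<Rightarrow> nat \<Rightarrow> bool" where
  "holds lab \<pi> len (Prop p) i = (p \<in> lab (\<pi> i))"
| "holds lab \<pi> len (Neg a) i = (\<not> holds lab \<pi> len a i)"
| "holds lab \<pi> len (Or a b) i = (holds lab \<pi> len a i \<or> holds lab \<pi> len b i)"
| "holds lab \<pi> len (And a b) i = (holds lab \<pi> len a i \<and> holds lab \<pi> len b i)"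
| "holds lab \<pi> len (Next a) i = (enat (Suc i) < len \<and> holds lab \<pi> len a (Suc i))"
| "holds lab \<pi> len (Until a b) i =
     (\<exists>j. i \<le> j \<and> enat j < len \<and> holds lab \<pi> len b j \<and> (\<forall>k. i \<le> k \<and> k < j \<longrightarrow> holds lab \<pi> len a k))"
| "holds lab \<pi> len (Release a b) i =
     ((\<forall>j. i \<le> j \<and> enat j < len \<longrightarrow> holds lab \<pi> len b j) \<or>
      (\<exists>j. i \<le> j \<and> enat j < len \<and> holds lab \<pi> len a j \<and> holds lab \<pi> len b j \<and>
           (\<forall>k. i \<le> k \<and> k < j \<longrightarrow> holds lab \<pi> len b k)))"

definition EF_sat :: "nat list set \<Rightarrow> (nat list \<Rightarrow> 'a set) \<Rightarrow> nat list \<Rightarrow> 'a ltl \<Rightarrow> bool" where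
  "EF_sat D lab u \<psi> \<longleftrightarrow> (\<exists>\<pi> (n::nat) i. root_path D \<pi> (enat n) \<and> i < n \<and> \<pi> i = u \<and>
                             holds lab \<pi> (enat n) \<psi> i)"

definition E_sat :: "nat list set \<Rightarrow> (nat list \<Rightarrow> 'a set) \<Rightarrow> nat list \<Rightarrow> 'a ltl \<Rightarrow> bool" where
  "E_sat D lab u \<psi> \<longleftrightarrow> (\<exists>\<pi> i. root_path D \<pi> \<infinity> \<and> \<pi> i = u \<and> holds lab \<pi> \<infinity> \<psi> i)"

end

theory Submission
  imports Defs
begin

(* For a word w and positions z <= m, let R(z, m) say that psi holds at z on the finite word
   w(0) ... w(m); the cosafe formula has to express that R(z, m) holds for some m >= z.
   A chain is a list of triples (r, c, d) of cosafe formulas. Cutting it at positions p_1 < ... < p_n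
   splits an interval into segments, with c holding inside a segment and d at its cut; r is the
   reader of the segment. A finite set of chains represents R if every reader is sound (if a suffix
   of a chain starting at segment k can be cut from z on and r_k holds at z, then R(z, last cut))
   and the set is complete (for all w and m some chain can be cut on [0, m] such that R(z, m) implies
   that the reader of the segment of z holds at z). Then "R(z, m) for some m >= z" is the disjunction,
   over the chains and their segments k, of r_k and c_k U (d_k and X (c_(k+1) U ...)), which is cosafe.
   Representations of psi and of its negation are built together by induction: X shifts chains by
   one position, Boolean connectives merge two chains along the union of their cuts, and (weak)
   until refines each segment of a merged chain at the last position where its right argument holds
   and at the last position where its left argument fails. Since the tree is leafless, every finite
   root path extends to an infinite one, so E^f psi and E psi' agree. *)

primrec sat_inf :: "(nat \<Rightarrow> 'a set) \<Rightarrow> 'a ltl \<Rightarrow> nat \<Rightarrow> bool" where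
  "sat_inf w (Prop p) i = (p \<in> w i)"
| "sat_inf w (Neg a) i = (\<not> sat_inf w a i)"
| "sat_inf w (Or a b) i = (sat_inf w a i \<or> sat_inf w b i)"
| "sat_inf w (And a b) i = (sat_inf w a i \<and> sat_inf w b i)"
| "sat_inf w (Next a) i = sat_inf w a (Suc i)"
| "sat_inf w (Until a b) i = (\<exists>j. i \<le> j \<and> sat_inf w b j \<and> (\<forall>k. i \<le> k \<and> k < j \<longrightarrow> sat_inf w a k))"
| "sat_inf w (Release a b) i = ((\<forall>j. i \<le> j \<longrightarrow> sat_inf w b j) \<or>
      (\<exists>j. i \<le> j \<and> sat_inf w a j \<and> sat_inf w b j \<and> (\<forall>k. i \<le> k \<and> k < j \<longrightarrow> sat_inf w b k)))"

text \<open>Here \<open>m\<close> is the last position of the finite word, not its length.\<close>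

primrec sat_fin :: "(nat \<Rightarrow> 'a set) \<Rightarrow> nat \<Rightarrow> 'a ltl \<Rightarrow> nat \<Rightarrow> bool" where
  "sat_fin w m (Prop p) i = (p \<in> w i)"
| "sat_fin w m (Neg a) i = (\<not> sat_fin w m a i)"
| "sat_fin w m (Or a b) i = (sat_fin w m a i \<or> sat_fin w m b i)"
| "sat_fin w m (And a b) i = (sat_fin w m a i \<and> sat_fin w m b i)"
| "sat_fin w m (Next a) i = (i < m \<and> sat_fin w m a (Suc i))"
| "sat_fin w m (Until a b) i =
     (\<exists>j. i \<le> j \<and> j \<le> m \<and> sat_fin w m b j \<and> (\<forall>k. i \<le> k \<and> k < j \<longrightarrow> sat_fin w m a k))"
| "sat_fin w m (Release a b) i = ((\<forall>j. i \<le> j \<and> j \<le> m \<longrightarrow> sat_fin w m b j) \<or>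
      (\<exists>j. i \<le> j \<and> j \<le> m \<and> sat_fin w m a j \<and> sat_fin w m b j \<and>
           (\<forall>k. i \<le> k \<and> k < j \<longrightarrow> sat_fin w m b k)))"

lemma holds_infinity_iff_sat_inf: "holds lab \<pi> \<infinity> \<phi> i \<longleftrightarrow> sat_inf (\<lambda>k. lab (\<pi> k)) \<phi> i"
  by (induction \<phi> arbitrary: i) simp_all

lemma holds_finite_iff_sat_fin: "holds lab \<pi> (enat (Suc m)) \<phi> i \<longleftrightarrow> sat_fin (\<lambda>k. lab (\<pi> k)) m \<phi> i"
  by (induction \<phi> arbitrary: i) (auto simp: less_Suc_eq_le)

lemma sat_fin_cong:
  assumes "\<And>k. i \<le> k \<Longrightarrow> k \<le> m \<Longrightarrow> w k = w' k" and "i \<le> m"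
  shows "sat_fin w m \<phi> i \<longleftrightarrow> sat_fin w' m \<phi> i"
  using assms
proof (induction \<phi> arbitrary: i)
  case (Next a)
  then show ?case by (cases "i < m") auto
next
  case (Until a b)
  then have "\<And>j. i \<le> j \<Longrightarrow> j \<le> m \<Longrightarrow> (sat_fin w m a j \<longleftrightarrow> sat_fin w' m a j) \<and> (sat_fin w m b j \<longleftrightarrow> sat_fin w' m b j)"
    by auto
  then show ?case by (simp (no_asm)) (meson dual_order.trans less_imp_le_nat)
next
  case (Release a b)
  then have "\<And>j. i \<le> j \<Longrightarrow> j \<le> m \<Longrightarrow> (sat_fin w m a j \<longleftrightarrow> sat_fin w' m a j) \<and> (sat_fin w m b j \<longleftrightarrow> sat_fin w' m b j)"
    by auto
  then show ?case by (simp (no_asm)) (meson dual_order.trans less_imp_le_nat)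
qed auto

definition tt :: "'a ltl" where "tt = Or (Prop undefined) (Neg (Prop undefined))"
definition ff :: "'a ltl" where "ff = And (Prop undefined) (Neg (Prop undefined))"

lemma sat_inf_tt [simp]: "sat_inf w tt i" and sat_inf_ff [simp]: "\<not> sat_inf w ff i"
  and cosafe_tt [simp]: "cosafe tt" and cosafe_ff [simp]: "cosafe ff"
  by (auto simp: tt_def ff_def)

type_synonym ('r, 'a) chain = "('r \<times> 'a ltl \<times> 'a ltl) list"
type_synonym 'a word_rel = "(nat \<Rightarrow> 'a set) \<Rightarrow> nat \<Rightarrow> nat \<Rightarrow> bool"

fun chain_cuts :: "(nat \<Rightarrow> 'a set) \<Rightarrow> ('r, 'a) chain \<Rightarrow> nat list \<Rightarrow> nat \<Rightarrow> bool" where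
  "chain_cuts w [] [] a = True"
| "chain_cuts w ((r, c, d) # T) (p # ps) a \<longleftrightarrow>
     a \<le> p \<and> (\<forall>y. a \<le> y \<and> y < p \<longrightarrow> sat_inf w c y) \<and> sat_inf w d p \<and> chain_cuts w T ps (Suc p)"
| "chain_cuts w [] (p # ps) a = False"
| "chain_cuts w (s # T) [] a = False"

fun reader :: "('r \<times> 'b) list \<Rightarrow> nat list \<Rightarrow> nat \<Rightarrow> 'r" where
  "reader (s # T) (p # ps) z = (if z \<le> p \<or> T = [] then fst s else reader T ps z)"
| "reader [] ps z = undefined"
| "reader (s # T) [] z = undefined"

lemma chain_cuts_length: "chain_cuts w T ps a \<Longrightarrow> length ps = length T"
  by (induction w T ps a rule: chain_cuts.induct) auto

lemma chain_cuts_ge: "chain_cuts w T ps a \<Longrightarrow> p \<in> set ps \<Longrightarrow> a \<le> p"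
  by (induction w T ps a rule: chain_cuts.induct) auto

lemma chain_cuts_Nil_iff [simp]: "chain_cuts w [] ps a \<longleftrightarrow> ps = []"
  by (cases ps) auto

lemma chain_cuts_ne: "chain_cuts w T ps a \<Longrightarrow> T \<noteq> [] \<Longrightarrow> ps \<noteq> []"
  using chain_cuts_length by fastforce

lemma chain_cuts_last_ge: "chain_cuts w T ps a \<Longrightarrow> T \<noteq> [] \<Longrightarrow> a \<le> last ps"
  using chain_cuts_ge chain_cuts_ne by (metis last_in_set)

lemma chain_cuts_Cons_iff:
  "chain_cuts w (s # T) ps a \<longleftrightarrow> (\<exists>p ps'. ps = p # ps' \<and> a \<le> p \<and>
     (\<forall>y. a \<le> y \<and> y < p \<longrightarrow> sat_inf w (fst (snd s)) y) \<and> sat_inf w (snd (snd s)) p \<and> chain_cuts w T ps' (Suc p))"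
  by (cases s; cases ps) auto

lemma chain_cuts_hd_lt_last:
  "chain_cuts w (s # T) (p # ps) a \<Longrightarrow> T \<noteq> [] \<Longrightarrow> p < last ps"
  using chain_cuts_last_ge[of w T ps "Suc p"] by (cases s) auto

lemma chain_cuts_hd_le_last: "chain_cuts w T ps a \<Longrightarrow> T \<noteq> [] \<Longrightarrow> hd ps \<le> last ps"
proof (induction w T ps a rule: chain_cuts.induct)
  case (2 w r c d T p ps a)
  then show ?case using chain_cuts_hd_lt_last[of w "(r, c, d)" T p ps a] by (cases T) auto
qed auto

lemma chain_cuts_ConsD:
  assumes "chain_cuts w (s # T) (p # ps) a" and "T \<noteq> []"
  shows "chain_cuts w T ps (Suc p) \<and> p < last ps \<and> last (p # ps) = last ps \<and>
    (\<forall>z > p. reader (s # T) (p # ps) z = reader T ps z)"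
proof -
  have "chain_cuts w T ps (Suc p)" using assms(1) by (cases s) auto
  then show ?thesis using chain_cuts_ne chain_cuts_hd_lt_last[OF assms] assms(2) by auto
qed

lemma chain_cuts_last_eq_start:
  assumes "chain_cuts w T ps a" and "last ps = a" and "T \<noteq> []"
  shows "tl T = []"
proof (rule ccontr)
  assume "tl T \<noteq> []"
  then obtain s T0 p ps0 where T: "T = s # T0" and ps: "ps = p # ps0" and "T0 \<noteq> []"
    using assms by (cases T; cases ps) auto
  then have "p < last ps0" using chain_cuts_hd_lt_last assms(1) by blast
  moreover have "ps0 \<noteq> []" "a \<le> p" using assms(1) T ps \<open>T0 \<noteq> []\<close> by (cases s, auto dest: chain_cuts_ne)+
  ultimately show False using assms(2) ps by simp
qed

lemma chain_cuts_appendD: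
  assumes "chain_cuts w (A @ B) ps a" and "A \<noteq> []"
  shows "\<exists>psA psB. ps = psA @ psB \<and> chain_cuts w A psA a \<and> chain_cuts w B psB (Suc (last psA))"
  using assms
proof (induction A arbitrary: ps a)
  case (Cons s A)
  obtain p ps' where ps: "ps = p # ps'" and rest: "chain_cuts w (A @ B) ps' (Suc p)"
    and hd: "chain_cuts w [s] [p] a"
    using Cons.prems(1) by (cases s) (auto simp: chain_cuts_Cons_iff)
  show ?case
  proof (cases "A = []")
    case True
    then show ?thesis using ps rest hd by (intro exI[of _ "[p]"] exI[of _ ps']) auto
  next
    case False
    with Cons.IH[OF rest] obtain psA psB where
      "ps' = psA @ psB" "chain_cuts w A psA (Suc p)" "chain_cuts w B psB (Suc (last psA))"
      by blast
    moreover have "psA \<noteq> []" using calculation(2) False chain_cuts_ne by blast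
    ultimately show ?thesis using ps hd by (intro exI[of _ "p # psA"] exI[of _ psB]) (cases s, auto)
  qed
qed simp

lemma chain_cuts_appendI:
  "chain_cuts w A psA a \<Longrightarrow> chain_cuts w B psB (Suc (last psA)) \<Longrightarrow> A \<noteq> [] \<Longrightarrow>
    chain_cuts w (A @ B) (psA @ psB) a"
proof (induction w A psA a rule: chain_cuts.induct)
  case (2 w r c d T p ps a)
  then show ?case by (cases "T = []") (auto dest: chain_cuts_ne)
qed auto

lemma chain_cuts_start_mono:
  "chain_cuts w T ps a \<Longrightarrow> a \<le> a' \<Longrightarrow> (T \<noteq> [] \<Longrightarrow> a' \<le> hd ps) \<Longrightarrow> chain_cuts w T ps a'"
  by (cases "(w, T, ps, a)" rule: chain_cuts.cases) auto

lemma chain_cuts_start_ext: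
  "chain_cuts w ((r, c, d) # T) ps a' \<Longrightarrow> a \<le> a' \<Longrightarrow> (\<forall>y. a \<le> y \<and> y < a' \<longrightarrow> sat_inf w c y) \<Longrightarrow>
    chain_cuts w ((r, c, d) # T) ps a"
  by (cases ps) (auto, meson leI le_trans)

lemma reader_hd: "chain_cuts w T ps a \<Longrightarrow> T \<noteq> [] \<Longrightarrow> z \<le> hd ps \<Longrightarrow> reader T ps z = fst (hd T)"
  by (cases "(w, T, ps, a)" rule: chain_cuts.cases) auto

lemma reader_append_left:
  "chain_cuts w T ps a \<Longrightarrow> T \<noteq> [] \<Longrightarrow> z \<le> last ps \<Longrightarrow> length Y = length X \<Longrightarrow>
    reader (T @ X) (ps @ Y) z = reader T ps z"
proof (induction w T ps a rule: chain_cuts.induct)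
  case (2 w r c d T p ps a)
  then show ?case by (cases "T = []") (auto dest: chain_cuts_ne)
qed auto

lemma reader_append_right:
  "chain_cuts w T ps a \<Longrightarrow> T \<noteq> [] \<Longrightarrow> last ps < z \<Longrightarrow> X \<noteq> [] \<Longrightarrow>
    reader (T @ X) (ps @ Y) z = reader X Y z"
proof (induction w T ps a rule: chain_cuts.induct)
  case (2 w r c d T p ps a)
  show ?case
  proof (cases "T = []")
    case False
    have "chain_cuts w T ps (Suc p)" using "2.prems"(1) by simp
    then have "ps \<noteq> []" using False chain_cuts_ne by blast
    moreover have "p < last ps" using chain_cuts_hd_lt_last[OF "2.prems"(1) False] .
    ultimately show ?thesis using 2 False by auto
  qed (use 2 in auto)
qed auto

lemma chain_cuts_append_readers:
  assumes cuts_V: "chain_cuts w V psV a" and "V \<noteq> []" and cuts_R: "chain_cuts w R psR (Suc (last psV))"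
    and m: "last (last psV # psR) = m"
    and readers_V: "\<forall>z. a \<le> z \<and> z \<le> last psV \<longrightarrow> P z \<longrightarrow> sat_inf w (reader V psV z) z"
    and readers_R: "\<forall>z. last psV < z \<and> z \<le> m \<longrightarrow> P z \<longrightarrow> sat_inf w (reader R psR z) z"
  shows "chain_cuts w (V @ R) (psV @ psR) a \<and> last (psV @ psR) = m \<and>
    (\<forall>z. a \<le> z \<and> z \<le> m \<longrightarrow> P z \<longrightarrow> sat_inf w (reader (V @ R) (psV @ psR) z) z)"
proof (intro conjI allI impI)
  show "chain_cuts w (V @ R) (psV @ psR) a" using chain_cuts_appendI[OF cuts_V cuts_R \<open>V \<noteq> []\<close>] .
  show "last (psV @ psR) = m" using m chain_cuts_ne[OF cuts_V \<open>V \<noteq> []\<close>] by (cases "psR = []") auto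
  fix z assume z: "a \<le> z \<and> z \<le> m" "P z"
  show "sat_inf w (reader (V @ R) (psV @ psR) z) z"
  proof (cases "z \<le> last psV")
    case True
    then show ?thesis
      using reader_append_left[OF cuts_V \<open>V \<noteq> []\<close>] chain_cuts_length[OF cuts_R] readers_V z by simp
  next
    case False
    then have "R \<noteq> []" using z m cuts_R by (cases psR) auto
    then show ?thesis using reader_append_right[OF cuts_V \<open>V \<noteq> []\<close>] readers_R z False by simp
  qed
qed

lemma chain_cuts_suffix_at:
  "chain_cuts w T ps a \<Longrightarrow> T \<noteq> [] \<Longrightarrow> a \<le> z \<Longrightarrow> z \<le> last ps \<Longrightarrow>
    \<exists>k < length T. fst (T ! k) = reader T ps z \<and> (\<exists>ps'. chain_cuts w (drop k T) ps' z \<and> last ps' = last ps)"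
proof (induction w T ps a rule: chain_cuts.induct)
  case (2 w r c d T p ps a)
  show ?case
  proof (cases "z \<le> p \<or> T = []")
    case True
    then have "chain_cuts w ((r, c, d) # T) (p # ps) z"
      using 2 by (cases T) (auto simp: chain_cuts_length)
    then show ?thesis using True by (intro exI[of _ 0]) (auto intro!: exI[of _ "p # ps"])
  next
    case False
    then have "T \<noteq> []" "p < z" by auto
    then have "last (p # ps) = last ps" using "2.prems"(1) chain_cuts_ne by auto
    with "2.IH" "2.prems" False obtain k ps' where
      "k < length T" "fst (T ! k) = reader T ps z" "chain_cuts w (drop k T) ps' z" "last ps' = last ps"
      by fastforce
    then show ?thesis using False \<open>last (p # ps) = last ps\<close> by (intro exI[of _ "Suc k"]) auto
  qed
qed auto

fun chain_formula :: "('r, 'a) chain \<Rightarrow> 'a ltl" where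
  "chain_formula [] = ff"
| "chain_formula [(r, c, d)] = Until c d"
| "chain_formula ((r, c, d) # s # T) = Until c (And d (Next (chain_formula (s # T))))"

lemma sat_inf_chain_formula: "T \<noteq> [] \<Longrightarrow> sat_inf w (chain_formula T) z \<longleftrightarrow> (\<exists>ps. chain_cuts w T ps z)"
proof (induction T arbitrary: z rule: chain_formula.induct)
  case (2 r c d)
  show ?case
  proof
    assume "sat_inf w (chain_formula [(r, c, d)]) z"
    then obtain j where "chain_cuts w [(r, c, d)] [j] z" by auto
    then show "\<exists>ps. chain_cuts w [(r, c, d)] ps z" ..
  qed (auto simp: chain_cuts_Cons_iff)
next
  case (3 r c d s T)
  have "sat_inf w (chain_formula ((r, c, d) # s # T)) z \<longleftrightarrow>
      (\<exists>j. z \<le> j \<and> (\<forall>k. z \<le> k \<and> k < j \<longrightarrow> sat_inf w c k) \<and> sat_inf w d j \<and> (\<exists>ps. chain_cuts w (s # T) ps (Suc j)))"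
    using "3.IH" by auto
  also have "\<dots> \<longleftrightarrow> (\<exists>ps. chain_cuts w ((r, c, d) # s # T) ps z)"
    by (auto simp: chain_cuts_Cons_iff simp del: chain_cuts.simps)
  finally show ?case .
qed simp

lemma cosafe_chain_formula: "(\<forall>(r, c, d) \<in> set T. cosafe c \<and> cosafe d) \<Longrightarrow> cosafe (chain_formula T)"
  by (induction T rule: chain_formula.induct) auto

text \<open>\<open>S r w z m\<close> is the claim made by the reader \<open>r\<close> at position \<open>z\<close> about the cut point \<open>m\<close>.\<close>

definition sound_chain :: "('r \<Rightarrow> 'a word_rel) \<Rightarrow> ('r, 'a) chain \<Rightarrow> bool" where
  "sound_chain S T \<longleftrightarrow>
     (\<forall>k < length T. \<forall>w z ps. chain_cuts w (drop k T) ps z \<longrightarrow> S (fst (T ! k)) w z (last ps))"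

definition guarantees :: "'a word_rel \<Rightarrow> 'a ltl \<Rightarrow> 'a word_rel" where
  "guarantees R \<phi> w z m \<longleftrightarrow> (sat_inf w \<phi> z \<longrightarrow> R w z m)"

definition complete_chains :: "'a word_rel \<Rightarrow> ('a ltl, 'a) chain list \<Rightarrow> bool" where
  "complete_chains R TT \<longleftrightarrow> (\<forall>w m. \<exists>T \<in> set TT. \<exists>ps. chain_cuts w T ps 0 \<and> last ps = m \<and>
     (\<forall>z \<le> m. R w z m \<longrightarrow> sat_inf w (reader T ps z) z))"

definition wf_chain :: "('a ltl, 'a) chain \<Rightarrow> bool" where
  "wf_chain T \<longleftrightarrow> T \<noteq> [] \<and> (\<forall>(r, c, d) \<in> set T. cosafe r \<and> cosafe c \<and> cosafe d)"

definition represents :: "('a ltl, 'a) chain list \<Rightarrow> 'a word_rel \<Rightarrow> bool" where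
  "represents TT R \<longleftrightarrow>
     (\<forall>T \<in> set TT. wf_chain T \<and> sound_chain (guarantees R) T) \<and> complete_chains R TT"

lemma represents_nonempty: "represents TT R \<Longrightarrow> T \<in> set TT \<Longrightarrow> T \<noteq> []"
  by (auto simp: represents_def wf_chain_def)

lemma represents_cong:
  assumes "represents TT R" and "\<And>w z m. z \<le> m \<Longrightarrow> R w z m \<longleftrightarrow> R' w z m"
  shows "represents TT R'"
  using assms unfolding represents_def sound_chain_def complete_chains_def guarantees_def
  apply safe
    apply blast
   apply (metis chain_cuts_last_ge drop_eq_Nil2 linorder_not_le)
  by metis

lemma sound_chain_Nil [simp]: "sound_chain S []"
  by (simp add: sound_chain_def)

lemma sound_chain_Cons:
  "sound_chain S (s # T) \<longleftrightarrow> (\<forall>w z ps. chain_cuts w (s # T) ps z \<longrightarrow> S (fst s) w z (last ps)) \<and> sound_chain S T"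
  unfolding sound_chain_def by (auto simp: less_Suc_eq_0_disj)

lemma sound_chain_append:
  "sound_chain S (V @ R) \<longleftrightarrow>
    (\<forall>k < length V. \<forall>w z ps. chain_cuts w (drop k V @ R) ps z \<longrightarrow> S (fst (V ! k)) w z (last ps)) \<and> sound_chain S R"
  by (induction V) (auto simp: sound_chain_Cons less_Suc_eq_0_disj)

lemma sound_chain_tl: "sound_chain S T \<Longrightarrow> sound_chain S (tl T)"
  by (cases T) (auto simp: sound_chain_Cons)

lemma sound_chain_hd:
  "sound_chain S T \<Longrightarrow> T \<noteq> [] \<Longrightarrow> chain_cuts w T ps z \<Longrightarrow> S (fst (hd T)) w z (last ps)"
  by (cases T) (auto simp: sound_chain_Cons)

definition disj_list :: "'a ltl list \<Rightarrow> 'a ltl" where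
  "disj_list xs = foldr Or xs ff"

lemma sat_inf_disj_list: "sat_inf w (disj_list xs) z \<longleftrightarrow> (\<exists>x \<in> set xs. sat_inf w x z)"
  unfolding disj_list_def by (induction xs) auto

lemma cosafe_disj_list: "\<forall>x \<in> set xs. cosafe x \<Longrightarrow> cosafe (disj_list xs)"
  unfolding disj_list_def by (induction xs) auto

definition some_end_formula :: "('a ltl, 'a) chain list \<Rightarrow> 'a ltl" where
  "some_end_formula TT =
     disj_list [And (fst (T ! k)) (chain_formula (drop k T)). T \<leftarrow> TT, k \<leftarrow> [0..<length T]]"

lemma cosafe_some_end_formula: "represents TT R \<Longrightarrow> cosafe (some_end_formula TT)"
  unfolding some_end_formula_def represents_def wf_chain_def
  apply (rule cosafe_disj_list)
  apply (auto dest!: in_set_dropD intro!: cosafe_chain_formula)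
  by (metis (mono_tags, lifting) case_prodD nth_mem prod.collapse)

lemma sat_inf_some_end_formula:
  assumes "represents TT R"
  shows "sat_inf w (some_end_formula TT) z \<longleftrightarrow> (\<exists>m \<ge> z. R w z m)"
proof
  assume "sat_inf w (some_end_formula TT) z"
  then obtain T k where T: "T \<in> set TT" "k < length T" "sat_inf w (fst (T ! k)) z"
    and "sat_inf w (chain_formula (drop k T)) z"
    by (auto simp: some_end_formula_def sat_inf_disj_list)
  then obtain ps where ps: "chain_cuts w (drop k T) ps z"
    using sat_inf_chain_formula[of "drop k T" w z] by auto
  have "R w z (last ps)" using assms T ps by (auto simp: represents_def sound_chain_def guarantees_def)
  moreover have "z \<le> last ps" using chain_cuts_last_ge[OF ps] T by auto
  ultimately show "\<exists>m \<ge> z. R w z m" by auto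
next
  assume "\<exists>m \<ge> z. R w z m"
  then obtain m where m: "z \<le> m" "R w z m" by auto
  from assms obtain T ps where T: "T \<in> set TT" "chain_cuts w T ps 0" "last ps = m"
    and readers: "\<forall>z \<le> m. R w z m \<longrightarrow> sat_inf w (reader T ps z) z"
    unfolding represents_def complete_chains_def by blast
  have "T \<noteq> []" using assms T by (auto simp: represents_def wf_chain_def)
  with chain_cuts_suffix_at[OF T(2), of z] m T obtain k ps' where
    k: "k < length T" "fst (T ! k) = reader T ps z" "chain_cuts w (drop k T) ps' z"
    by auto
  have "sat_inf w (fst (T ! k)) z" using k readers m by auto
  moreover have "sat_inf w (chain_formula (drop k T)) z"
    using sat_inf_chain_formula[of "drop k T" w z] k by auto
  ultimately show "sat_inf w (some_end_formula TT) z" using T k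
    by (auto simp: some_end_formula_def sat_inf_disj_list intro!: bexI[of _ T] bexI[of _ k])
qed

lemma represents_literal: "cosafe \<phi> \<Longrightarrow> represents [[(\<phi>, tt, tt)]] (\<lambda>w z m. sat_inf w \<phi> z)"
  unfolding represents_def sound_chain_def complete_chains_def wf_chain_def guarantees_def
  by (auto simp: chain_cuts_Cons_iff)

definition shift_chain :: "('a ltl, 'a) chain \<Rightarrow> ('a ltl, 'a) chain" where
  "shift_chain T = map (\<lambda>(r, c, d). (Next r, Next c, Next d)) T"

text \<open>A segment consisting of its start position alone (\<open>c = ff\<close>); its reader decides the last position.\<close>

definition end_entry :: "bool \<Rightarrow> 'a ltl \<times> 'a ltl \<times> 'a ltl" where
  "end_entry weak = (if weak then tt else ff, ff, tt)"

definition next_chains :: "bool \<Rightarrow> ('a ltl, 'a) chain list \<Rightarrow> ('a ltl, 'a) chain list" where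
  "next_chains weak TT = [shift_chain T' @ [end_entry weak]. T \<leftarrow> TT, T' \<leftarrow> [T, tl T]]"

definition next_rel :: "bool \<Rightarrow> 'a word_rel \<Rightarrow> 'a word_rel" where
  "next_rel weak R w z m \<longleftrightarrow> (z < m \<and> R w (Suc z) m) \<or> (weak \<and> z = m)"

lemma chain_cuts_shift_chain: "chain_cuts w (shift_chain T) ps a \<longleftrightarrow> chain_cuts w T (map Suc ps) (Suc a)"
proof (induction T arbitrary: ps a)
  case (Cons s T)
  have shift: "(\<forall>y. a \<le> y \<and> y < p \<longrightarrow> sat_inf w c (Suc y)) \<longleftrightarrow> (\<forall>y. Suc a \<le> y \<and> y < Suc p \<longrightarrow> sat_inf w c y)"
    for c p by (metis Suc_le_D Suc_le_mono Suc_less_eq)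
  show ?case using Cons.IH shift by (cases s; cases ps) (auto simp: shift_chain_def)
qed (simp add: shift_chain_def)

lemma chain_cuts_end_entry: "chain_cuts w [end_entry weak] ps a \<longleftrightarrow> ps = [a]"
  by (cases ps) (auto simp: end_entry_def le_less)

lemma reader_shift_chain:
  "length ps = length T \<Longrightarrow> T \<noteq> [] \<Longrightarrow> reader (shift_chain T) ps z = Next (reader T (map Suc ps) (Suc z))"
proof (induction T ps z rule: reader.induct)
  case (1 s T p ps z)
  then show ?case by (cases s, cases T) (auto simp: shift_chain_def)
qed auto

lemma sound_next_chain:
  assumes "sound_chain (guarantees R) T"
  shows "sound_chain (guarantees (next_rel weak R)) (shift_chain T @ [end_entry weak])"
  unfolding sound_chain_def guarantees_def
proof (intro allI impI)
  fix w z k ps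
  let ?T' = "shift_chain T @ [end_entry weak]"
  assume k: "k < length ?T'" and cuts: "chain_cuts w (drop k ?T') ps z" and r: "sat_inf w (fst (?T' ! k)) z"
  show "next_rel weak R w z (last ps)"
  proof (cases "k < length T")
    case True
    have "drop k ?T' = shift_chain (drop k T) @ [end_entry weak]"
      using True by (simp add: shift_chain_def drop_map)
    with cuts True obtain psA where
      psA: "chain_cuts w (shift_chain (drop k T)) psA z" and ps: "ps = psA @ [Suc (last psA)]"
      by (auto simp: shift_chain_def chain_cuts_end_entry dest!: chain_cuts_appendD)
    have "psA \<noteq> []" using psA True chain_cuts_ne by (fastforce simp: shift_chain_def)
    have cutsA: "chain_cuts w (drop k T) (map Suc psA) (Suc z)" using psA chain_cuts_shift_chain by blast
    have "fst (?T' ! k) = Next (fst (T ! k))"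
      using True by (auto simp: nth_append shift_chain_def split: prod.splits)
    then have "R w (Suc z) (last (map Suc psA))"
      using r assms True cutsA by (auto simp: sound_chain_def guarantees_def)
    moreover have "z \<le> last psA" using chain_cuts_last_ge[OF psA] True by (simp add: shift_chain_def)
    ultimately show ?thesis using \<open>psA \<noteq> []\<close> ps by (simp add: last_map next_rel_def)
  next
    case False
    then have "drop k ?T' = [end_entry weak]" "?T' ! k = end_entry weak"
      using k by (auto simp: nth_append shift_chain_def)
    moreover from this(1) have "ps = [z]" using cuts chain_cuts_end_entry by metis
    ultimately show ?thesis using r by (auto simp: end_entry_def next_rel_def split: if_splits)
  qed
qed

lemma chain_cuts_skip_start:
  assumes cuts: "chain_cuts w T ps a" and "T \<noteq> []" and "a < last ps"
  shows "\<exists>T1 \<in> {T, tl T}. \<exists>ps1. T1 \<noteq> [] \<and> chain_cuts w T1 ps1 (Suc a) \<and> last ps1 = last ps \<and>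
    (\<forall>z > a. reader T1 ps1 z = reader T ps z)"
proof -
  obtain s T0 p ps0 where T: "T = s # T0" and ps: "ps = p # ps0" and "a \<le> p"
    using cuts \<open>T \<noteq> []\<close> by (auto simp: chain_cuts_Cons_iff neq_Nil_conv)
  show ?thesis
  proof (cases "p = a")
    case True
    then have "T0 \<noteq> []" using assms T ps by (cases s) auto
    moreover have cuts0: "chain_cuts w T0 ps0 (Suc a)" using cuts T ps True by (cases s) auto
    moreover have "ps0 \<noteq> []" using calculation chain_cuts_ne by blast
    ultimately show ?thesis using T ps True by (intro bexI[of _ T0] exI[of _ ps0]) auto
  next
    case False
    then have "chain_cuts w T ps (Suc a)"
      using cuts T ps \<open>a \<le> p\<close> by (intro chain_cuts_start_mono[OF cuts]) auto
    then show ?thesis using T ps \<open>a \<le> p\<close> False by (intro bexI[of _ T] exI[of _ ps]) auto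
  qed
qed

lemma chain_cuts_unshift:
  assumes cuts: "chain_cuts w T ps (Suc a)" and "T \<noteq> []"
  obtains psA where "chain_cuts w (shift_chain T) psA a" "Suc (last psA) = last ps"
    "\<And>z. reader (shift_chain T) psA z = Next (reader T ps (Suc z))"
proof -
  define psA where "psA = map (\<lambda>q. q - 1) ps"
  have "\<forall>q \<in> set ps. Suc a \<le> q" using chain_cuts_ge[OF cuts] by auto
  then have ps: "ps = map Suc psA" unfolding psA_def by (induction ps) auto
  have "ps \<noteq> []" using chain_cuts_ne[OF cuts \<open>T \<noteq> []\<close>] .
  then have "Suc (last psA) = last ps" using ps by (simp add: last_map)
  moreover have "chain_cuts w (shift_chain T) psA a" using cuts ps chain_cuts_shift_chain by auto
  moreover have "length psA = length T" using chain_cuts_length[OF cuts] ps by simp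
  ultimately show ?thesis using that reader_shift_chain[of psA T] \<open>T \<noteq> []\<close> ps by simp
qed

lemma complete_next_chains:
  assumes T: "T \<in> set TT" "T \<noteq> []" "chain_cuts w T ps 0"
    and readers: "\<forall>z \<le> last ps. R w z (last ps) \<longrightarrow> sat_inf w (reader T ps z) z"
  shows "\<exists>T' \<in> set (next_chains weak TT). \<exists>ps'. chain_cuts w T' ps' 0 \<and> last ps' = last ps \<and>
    (\<forall>z \<le> last ps. next_rel weak R w z (last ps) \<longrightarrow> sat_inf w (reader T' ps' z) z)"
proof (cases "last ps = 0")
  case True
  then have "tl T = []" using chain_cuts_last_eq_start[OF T(3)] T(2) by blast
  then have "[end_entry weak] \<in> set (next_chains weak TT)"
    using T by (auto simp: next_chains_def shift_chain_def intro!: bexI[of _ T])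
  moreover have "chain_cuts w [end_entry weak] [0] 0" by (simp add: chain_cuts_end_entry)
  moreover have "sat_inf w (reader [end_entry weak] [0] z) z" if "next_rel weak R w z 0" for z
    using that by (simp add: next_rel_def end_entry_def)
  ultimately show ?thesis using True by fastforce
next
  case False
  define m where "m = last ps"
  from chain_cuts_skip_start[OF T(3) T(2)] False obtain T1 ps1 where
    T1: "T1 \<in> {T, tl T}" "T1 \<noteq> []" "chain_cuts w T1 ps1 1" "last ps1 = m"
      and reader1: "\<forall>z > 0. reader T1 ps1 z = reader T ps z"
    unfolding m_def by auto
  obtain psA where cutsA: "chain_cuts w (shift_chain T1) psA 0" and lastA: "Suc (last psA) = m"
    and readerA: "\<And>z. reader (shift_chain T1) psA z = Next (reader T1 ps1 (Suc z))"
    using chain_cuts_unshift[of w T1 ps1 0] T1(2,3,4) by auto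
  have "shift_chain T1 @ [end_entry weak] \<in> set (next_chains weak TT)"
    using T T1 unfolding next_chains_def by auto
  moreover have "chain_cuts w [end_entry weak] [m] (Suc (last psA))" using lastA by (simp add: chain_cuts_end_entry)
  moreover have "\<forall>z. 0 \<le> z \<and> z \<le> last psA \<longrightarrow> next_rel weak R w z m \<longrightarrow>
      sat_inf w (reader (shift_chain T1) psA z) z"
    using readers reader1 lastA by (auto simp: readerA m_def next_rel_def Suc_le_eq)
  moreover have "\<forall>z. last psA < z \<and> z \<le> m \<longrightarrow> next_rel weak R w z m \<longrightarrow> sat_inf w (reader [end_entry weak] [m] z) z"
    using lastA by (auto simp: next_rel_def end_entry_def)
  moreover have "shift_chain T1 \<noteq> []" using T1(2) by (simp add: shift_chain_def)
  ultimately show ?thesis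
    using chain_cuts_append_readers[OF cutsA, of "[end_entry weak]" "[m]" m "\<lambda>z. next_rel weak R w z m"] lastA
    unfolding m_def[symmetric] by fastforce
qed

lemma represents_next:
  assumes "represents TT R"
  shows "represents (next_chains weak TT) (next_rel weak R)"
  unfolding represents_def
proof (rule conjI[OF ballI])
  fix T' assume "T' \<in> set (next_chains weak TT)"
  then obtain T T1 where T: "T \<in> set TT" and T1: "T1 \<in> {T, tl T}" and T': "T' = shift_chain T1 @ [end_entry weak]"
    by (auto simp: next_chains_def)
  have "wf_chain T" "sound_chain (guarantees R) T" using assms T by (auto simp: represents_def)
  then have "(\<forall>(r, c, d) \<in> set T1. cosafe r \<and> cosafe c \<and> cosafe d)" "sound_chain (guarantees R) T1"
    using T1 sound_chain_tl by (auto simp: wf_chain_def dest: list.set_sel(2))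
  then show "wf_chain T' \<and> sound_chain (guarantees (next_rel weak R)) T'"
    using T' sound_next_chain by (fastforce simp: wf_chain_def shift_chain_def end_entry_def)
next
  show "complete_chains (next_rel weak R) (next_chains weak TT)"
    unfolding complete_chains_def
  proof (intro allI)
    fix w m
    from assms obtain T ps where "T \<in> set TT" "T \<noteq> []" "chain_cuts w T ps 0" "last ps = m"
      "\<forall>z \<le> last ps. R w z (last ps) \<longrightarrow> sat_inf w (reader T ps z) z"
      by (auto simp: represents_def complete_chains_def wf_chain_def) blast
    from complete_next_chains[where R = R and weak = weak, OF this(1-3,5)] this(4)
    show "\<exists>T' \<in> set (next_chains weak TT). \<exists>ps'. chain_cuts w T' ps' 0 \<and> last ps' = m \<and>
        (\<forall>z \<le> m. next_rel weak R w z m \<longrightarrow> sat_inf w (reader T' ps' z) z)"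
      by simp
  qed
qed

text \<open>The cuts of a merged chain are the union of the cuts of the two chains; the end formula
  of a segment records which of the two chains is cut there.\<close>

fun merge_chains :: "('r, 'a) chain \<Rightarrow> ('s, 'a) chain \<Rightarrow> ('r \<times> 's, 'a) chain list" where
  "merge_chains [] [] = [[]]"
| "merge_chains ((r1, c1, d1) # xs) ((r2, c2, d2) # ys) =
     map (Cons ((r1, r2), And c1 c2, And d1 c2)) (merge_chains xs ((r2, c2, d2) # ys)) @
     map (Cons ((r1, r2), And c1 c2, And c1 d2)) (merge_chains ((r1, c1, d1) # xs) ys) @
     map (Cons ((r1, r2), And c1 c2, And d1 d2)) (merge_chains xs ys)"
| "merge_chains _ _ = []"

lemma merge_chains_Nil_iff:
  "M \<in> set (merge_chains T1 T2) \<Longrightarrow> (M = [] \<longleftrightarrow> T1 = []) \<and> (T2 = [] \<longleftrightarrow> T1 = [])"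
  by (induction T1 T2 arbitrary: M rule: merge_chains.induct) auto

lemma merge_chains_hd:
  "M \<in> set (merge_chains T1 T2) \<Longrightarrow> M \<noteq> [] \<Longrightarrow> fst (hd M) = (fst (hd T1), fst (hd T2))"
  by (induction T1 T2 arbitrary: M rule: merge_chains.induct) auto

lemma merge_chains_tl:
  "M \<in> set (merge_chains T1 T2) \<Longrightarrow> M \<noteq> [] \<Longrightarrow>
    \<exists>T1' \<in> {T1, tl T1}. \<exists>T2' \<in> {T2, tl T2}. tl M \<in> set (merge_chains T1' T2')"
  by (induction T1 T2 arbitrary: M rule: merge_chains.induct) auto

lemma merge_chains_entries:
  assumes "M \<in> set (merge_chains T1 T2)" and "((x1, x2), c, d) \<in> set M"
    and "\<forall>(r, c, d) \<in> set T1. P r \<and> cosafe c \<and> cosafe d" and "\<forall>(r, c, d) \<in> set T2. Q r \<and> cosafe c \<and> cosafe d"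
  shows "P x1 \<and> Q x2 \<and> cosafe c \<and> cosafe d"
  using assms
proof (induction T1 T2 arbitrary: M rule: merge_chains.induct)
  case (2 r1 c1 d1 xs r2 c2 d2 ys)
  from "2.prems"(1) obtain seg M' where M: "M = seg # M'" and
    cases: "(M' \<in> set (merge_chains xs ((r2, c2, d2) # ys)) \<and> seg = ((r1, r2), And c1 c2, And d1 c2)) \<or>
      (M' \<in> set (merge_chains ((r1, c1, d1) # xs) ys) \<and> seg = ((r1, r2), And c1 c2, And c1 d2)) \<or>
      (M' \<in> set (merge_chains xs ys) \<and> seg = ((r1, r2), And c1 c2, And d1 d2))"
    by auto
  show ?case
  proof (cases "((x1, x2), c, d) = seg")
    case True
    then show ?thesis using cases "2.prems"(3,4) by auto
  next
    case False
    then have "((x1, x2), c, d) \<in> set M'" using "2.prems"(2) M by simp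
    then show ?thesis using cases "2.IH" "2.prems"(3,4) by (elim disjE conjE) simp_all
  qed
qed auto

lemma chain_cuts_merge_chains:
  "M \<in> set (merge_chains T1 T2) \<Longrightarrow> chain_cuts w M ps a \<Longrightarrow>
    \<exists>ps1 ps2. chain_cuts w T1 ps1 a \<and> chain_cuts w T2 ps2 a \<and> last ps1 = last ps \<and> last ps2 = last ps"
proof (induction T1 T2 arbitrary: M ps a rule: merge_chains.induct)
  case (2 r1 c1 d1 xs r2 c2 d2 ys)
  obtain seg M' p ps' where M: "M = seg # M'" and ps: "ps = p # ps'" and "a \<le> p"
    and c: "\<forall>y. a \<le> y \<and> y < p \<longrightarrow> sat_inf w c1 y \<and> sat_inf w c2 y"
    and d: "sat_inf w (snd (snd seg)) p" and cuts': "chain_cuts w M' ps' (Suc p)"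
    using "2.prems" by (auto simp: chain_cuts_Cons_iff)
  have last_eq: "last (p # qs) = last ps" if "M' = [] \<longleftrightarrow> qs = []" "last qs = last ps'" for qs
    using that chain_cuts_length[OF cuts'] ps by (cases qs; cases ps') auto
  from "2.prems"(1) M consider
      (left) "M' \<in> set (merge_chains xs ((r2, c2, d2) # ys))" "seg = ((r1, r2), And c1 c2, And d1 c2)"
    | (right) "M' \<in> set (merge_chains ((r1, c1, d1) # xs) ys)" "seg = ((r1, r2), And c1 c2, And c1 d2)"
    | (both) "M' \<in> set (merge_chains xs ys)" "seg = ((r1, r2), And c1 c2, And d1 d2)"
    by auto
  then show ?case
  proof cases
    case left
    from "2.IH"(1)[OF left(1) cuts'] obtain ps1 ps2 where
      IH: "chain_cuts w xs ps1 (Suc p)" "chain_cuts w ((r2, c2, d2) # ys) ps2 (Suc p)" "last ps1 = last ps'" "last ps2 = last ps'"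
      by blast
    have "M' \<noteq> []" using merge_chains_Nil_iff[OF left(1)] by auto
    then have "last ps2 = last ps" using IH chain_cuts_ne[OF cuts'] ps by simp
    moreover have "chain_cuts w ((r2, c2, d2) # ys) ps2 a"
      using chain_cuts_start_ext[where a = a, OF IH(2)] c d left \<open>a \<le> p\<close> by (auto simp: less_Suc_eq)
    moreover have "last (p # ps1) = last ps"
      using last_eq[of ps1] IH merge_chains_Nil_iff[OF left(1)] by (auto dest: chain_cuts_length)
    ultimately show ?thesis using IH c d left \<open>a \<le> p\<close>
      by (intro exI[of _ "p # ps1"] exI[of _ ps2]) auto
  next
    case right
    from "2.IH"(2)[OF right(1) cuts'] obtain ps1 ps2 where
      IH: "chain_cuts w ((r1, c1, d1) # xs) ps1 (Suc p)" "chain_cuts w ys ps2 (Suc p)" "last ps1 = last ps'" "last ps2 = last ps'"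
      by blast
    have "M' \<noteq> []" using merge_chains_Nil_iff[OF right(1)] by auto
    then have "last ps1 = last ps" using IH chain_cuts_ne[OF cuts'] ps by simp
    moreover have "chain_cuts w ((r1, c1, d1) # xs) ps1 a"
      using chain_cuts_start_ext[where a = a, OF IH(1)] c d right \<open>a \<le> p\<close> by (auto simp: less_Suc_eq)
    moreover have "last (p # ps2) = last ps"
      using last_eq[of ps2] IH merge_chains_Nil_iff[OF right(1)] by (auto dest: chain_cuts_length)
    ultimately show ?thesis using IH c d right \<open>a \<le> p\<close>
      by (intro exI[of _ ps1] exI[of _ "p # ps2"]) auto
  next
    case both
    from "2.IH"(3)[OF both(1) cuts'] obtain ps1 ps2 where
      IH: "chain_cuts w xs ps1 (Suc p)" "chain_cuts w ys ps2 (Suc p)" "last ps1 = last ps'" "last ps2 = last ps'"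
      by blast
    have "last (p # ps1) = last ps" "last (p # ps2) = last ps"
      using last_eq[of ps1] last_eq[of ps2] IH merge_chains_Nil_iff[OF both(1)]
      by (auto dest: chain_cuts_length)
    then show ?thesis using IH c d both \<open>a \<le> p\<close>
      by (intro exI[of _ "p # ps1"] exI[of _ "p # ps2"]) auto
  qed
qed auto

definition pair_claim :: "('r \<Rightarrow> 'a word_rel) \<Rightarrow> ('s \<Rightarrow> 'a word_rel) \<Rightarrow> 'r \<times> 's \<Rightarrow> 'a word_rel" where
  "pair_claim S1 S2 x w z m \<longleftrightarrow> S1 (fst x) w z m \<and> S2 (snd x) w z m"

lemma sound_chain_merge_chains:
  assumes "sound_chain S1 T1" and "sound_chain S2 T2" and "M \<in> set (merge_chains T1 T2)"
  shows "sound_chain (pair_claim S1 S2) M"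
  using assms
proof (induction M arbitrary: T1 T2)
  case (Cons seg M')
  from merge_chains_tl[OF Cons.prems(3)] obtain T1' T2' where
    T': "T1' \<in> {T1, tl T1}" "T2' \<in> {T2, tl T2}" and M': "M' \<in> set (merge_chains T1' T2')"
    by auto
  have "sound_chain S1 T1'" "sound_chain S2 T2'" using T' Cons.prems(1,2) sound_chain_tl by auto
  then have "sound_chain (pair_claim S1 S2) M'" using Cons.IH M' by blast
  moreover have "pair_claim S1 S2 (fst seg) w z (last ps)" if cuts_M: "chain_cuts w (seg # M') ps z" for w z ps
  proof -
    obtain ps1 ps2 where cuts: "chain_cuts w T1 ps1 z" "chain_cuts w T2 ps2 z"
      and "last ps1 = last ps" "last ps2 = last ps"
      using chain_cuts_merge_chains[OF Cons.prems(3) cuts_M] by blast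
    moreover have "T1 \<noteq> []" "T2 \<noteq> []" using merge_chains_Nil_iff[OF Cons.prems(3)] by auto
    moreover have "fst seg = (fst (hd T1), fst (hd T2))" using merge_chains_hd[OF Cons.prems(3)] by simp
    ultimately show ?thesis
      using sound_chain_hd[OF Cons.prems(1) _ cuts(1)] sound_chain_hd[OF Cons.prems(2) _ cuts(2)]
      by (simp add: pair_claim_def)
  qed
  ultimately show ?case by (simp add: sound_chain_Cons)
qed simp

lemma merge_chains_complete_step:
  assumes M: "seg # M' \<in> set (merge_chains T1 T2)"
    and cuts1: "chain_cuts w T1 ps1 a" and cuts2: "chain_cuts w T2 ps2 a" and hd: "p \<le> hd ps1" "p \<le> hd ps2"
    and cut: "a \<le> p" "\<forall>y. a \<le> y \<and> y < p \<longrightarrow> sat_inf w (fst (snd seg)) y" "sat_inf w (snd (snd seg)) p"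
    and cuts': "chain_cuts w M' ps' (Suc p)" and last: "last (p # ps') = last ps1"
    and readers': "\<forall>z. p < z \<longrightarrow> z \<le> last (p # ps') \<longrightarrow> reader M' ps' z = (reader T1 ps1 z, reader T2 ps2 z)"
  shows "\<exists>M \<in> set (merge_chains T1 T2). \<exists>ps. chain_cuts w M ps a \<and> last ps = last ps1 \<and>
    (\<forall>z. a \<le> z \<longrightarrow> z \<le> last ps \<longrightarrow> reader M ps z = (reader T1 ps1 z, reader T2 ps2 z))"
proof (intro bexI[OF _ M] exI[of _ "p # ps'"] conjI allI impI)
  show "chain_cuts w (seg # M') (p # ps') a" using cut cuts' by (cases seg) auto
  show "last (p # ps') = last ps1" by (fact last)
  fix z assume "a \<le> z" "z \<le> last (p # ps')"
  have ne: "T1 \<noteq> []" "T2 \<noteq> []" using merge_chains_Nil_iff[OF M] by auto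
  show "reader (seg # M') (p # ps') z = (reader T1 ps1 z, reader T2 ps2 z)"
  proof (cases "z \<le> p")
    case True
    then show ?thesis using merge_chains_hd[OF M] reader_hd[OF cuts1 ne(1)] reader_hd[OF cuts2 ne(2)] hd by simp
  next
    case False
    then have "M' \<noteq> []" using \<open>z \<le> last (p # ps')\<close> cuts' by (cases ps') auto
    then show ?thesis using False readers' \<open>z \<le> last (p # ps')\<close> by simp
  qed
qed

lemma merge_chains_complete:
  assumes "chain_cuts w T1 ps1 a" "chain_cuts w T2 ps2 a" "T1 \<noteq> []" "T2 \<noteq> []" "last ps1 = last ps2"
  shows "\<exists>M \<in> set (merge_chains T1 T2). \<exists>ps. chain_cuts w M ps a \<and> last ps = last ps1 \<and>
    (\<forall>z. a \<le> z \<longrightarrow> z \<le> last ps \<longrightarrow> reader M ps z = (reader T1 ps1 z, reader T2 ps2 z))"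
  using assms
proof (induction T1 T2 arbitrary: ps1 ps2 a rule: merge_chains.induct)
  case (2 r1 c1 d1 xs r2 c2 d2 ys)
  obtain p1 ps1' where ps1: "ps1 = p1 # ps1'" and "a \<le> p1"
    and P1: "\<forall>y. a \<le> y \<and> y < p1 \<longrightarrow> sat_inf w c1 y" "sat_inf w d1 p1" "chain_cuts w xs ps1' (Suc p1)"
    using "2.prems"(1) by (auto simp: chain_cuts_Cons_iff)
  obtain p2 ps2' where ps2: "ps2 = p2 # ps2'" and "a \<le> p2"
    and P2: "\<forall>y. a \<le> y \<and> y < p2 \<longrightarrow> sat_inf w c2 y" "sat_inf w d2 p2" "chain_cuts w ys ps2' (Suc p2)"
    using "2.prems"(2) by (auto simp: chain_cuts_Cons_iff)
  note tail1 = chain_cuts_ConsD[OF "2.prems"(1)[unfolded ps1]]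
  note tail2 = chain_cuts_ConsD[OF "2.prems"(2)[unfolded ps2]]
  have "p1 \<le> last ps1" "p2 \<le> last ps2"
    using chain_cuts_hd_le_last[OF "2.prems"(1)] chain_cuts_hd_le_last[OF "2.prems"(2)] ps1 ps2 by auto
  have single1: "xs = [] \<Longrightarrow> ps1 = [p1]" and single2: "ys = [] \<Longrightarrow> ps2 = [p2]"
    using P1(3) P2(3) ps1 ps2 by auto
  txt \<open>The first cut of the merged chain is the smaller of the two first cuts.\<close>
  consider (lt) "p1 < p2" | (gt) "p2 < p1" | (eq) "p1 = p2" by linarith
  then show ?case
  proof cases
    case lt
    then have "xs \<noteq> []" using single1 \<open>p2 \<le> last ps2\<close> "2.prems"(5) by auto
    have "chain_cuts w ((r2, c2, d2) # ys) ps2 (Suc p1)"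
      using lt ps2 \<open>a \<le> p1\<close> by (rule_tac chain_cuts_start_mono[OF "2.prems"(2)]) auto
    moreover have "last ps1' = last ps2" using tail1[OF \<open>xs \<noteq> []\<close>] "2.prems"(5) ps1 by simp
    ultimately obtain M' ps' where M': "M' \<in> set (merge_chains xs ((r2, c2, d2) # ys))"
      and IH: "chain_cuts w M' ps' (Suc p1)" "last ps' = last ps1'"
        "\<forall>z. Suc p1 \<le> z \<longrightarrow> z \<le> last ps' \<longrightarrow> reader M' ps' z = (reader xs ps1' z, reader ((r2, c2, d2) # ys) ps2 z)"
      using "2.IH"(1)[OF P1(3) _ \<open>xs \<noteq> []\<close>] by blast
    have "ps' \<noteq> []" using merge_chains_Nil_iff[OF M'] \<open>xs \<noteq> []\<close> chain_cuts_ne[OF IH(1)] by blast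
    then show ?thesis
      using M' IH ps1 ps2 tail1[OF \<open>xs \<noteq> []\<close>] P1 P2 lt \<open>a \<le> p1\<close>
      by (intro merge_chains_complete_step[where seg = "((r1, r2), And c1 c2, And d1 c2)" and p = p1 and M' = M'
            and ps' = ps', OF _ "2.prems"(1,2)]) auto
  next
    case gt
    then have "ys \<noteq> []" using single2 \<open>p1 \<le> last ps1\<close> "2.prems"(5) by auto
    have "chain_cuts w ((r1, c1, d1) # xs) ps1 (Suc p2)"
      using gt ps1 \<open>a \<le> p2\<close> by (rule_tac chain_cuts_start_mono[OF "2.prems"(1)]) auto
    moreover have "last ps1 = last ps2'" using tail2[OF \<open>ys \<noteq> []\<close>] "2.prems"(5) ps2 by simp
    ultimately obtain M' ps' where M': "M' \<in> set (merge_chains ((r1, c1, d1) # xs) ys)"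
      and IH: "chain_cuts w M' ps' (Suc p2)" "last ps' = last ps1"
        "\<forall>z. Suc p2 \<le> z \<longrightarrow> z \<le> last ps' \<longrightarrow> reader M' ps' z = (reader ((r1, c1, d1) # xs) ps1 z, reader ys ps2' z)"
      using "2.IH"(2)[OF _ P2(3) _ \<open>ys \<noteq> []\<close>] by blast
    have "ps' \<noteq> []" using merge_chains_Nil_iff[OF M'] chain_cuts_ne[OF IH(1)] by blast
    then show ?thesis
      using M' IH ps1 ps2 tail2[OF \<open>ys \<noteq> []\<close>] P1 P2 gt \<open>a \<le> p2\<close>
      by (intro merge_chains_complete_step[where seg = "((r1, r2), And c1 c2, And c1 d2)" and p = p2 and M' = M'
            and ps' = ps', OF _ "2.prems"(1,2)]) auto
  next
    case eq
    show ?thesis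
    proof (cases "xs = []")
      case True
      then have "ys = []" using tail2 single1 "2.prems"(5) eq ps2 by (cases "ys = []") auto
      then show ?thesis using True ps1 ps2 P1 P2 eq \<open>a \<le> p1\<close> single1 single2
        by (intro merge_chains_complete_step[where seg = "((r1, r2), And c1 c2, And d1 d2)" and p = p1 and M' = "[]"
              and ps' = "[]", OF _ "2.prems"(1,2)]) auto
    next
      case False
      then have "ys \<noteq> []" using tail1 single2 "2.prems"(5) eq ps1 by auto
      have "last ps1' = last ps2'" using tail1[OF False] tail2[OF \<open>ys \<noteq> []\<close>] "2.prems"(5) ps1 ps2 by simp
      then obtain M' ps' where M': "M' \<in> set (merge_chains xs ys)"
        and IH: "chain_cuts w M' ps' (Suc p1)" "last ps' = last ps1'"
          "\<forall>z. Suc p1 \<le> z \<longrightarrow> z \<le> last ps' \<longrightarrow> reader M' ps' z = (reader xs ps1' z, reader ys ps2' z)"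
        using "2.IH"(3)[OF P1(3) _ False \<open>ys \<noteq> []\<close>] P2(3) eq by blast
      have "ps' \<noteq> []" using merge_chains_Nil_iff[OF M'] False chain_cuts_ne[OF IH(1)] by blast
      then show ?thesis
        using M' IH ps1 ps2 tail1[OF False] tail2[OF \<open>ys \<noteq> []\<close>] P1 P2 eq \<open>a \<le> p1\<close>
        by (intro merge_chains_complete_step[where seg = "((r1, r2), And c1 c2, And d1 d2)" and p = p1 and M' = M'
              and ps' = ps', OF _ "2.prems"(1,2)]) auto
    qed
  qed
qed auto

lemma represents_merge_sound:
  assumes rep: "represents TT1 R1" "represents TT2 R2"
    and T: "T1 \<in> set TT1" "T2 \<in> set TT2" and M: "M \<in> set (merge_chains T1 T2)"
  shows "M \<noteq> []" and "sound_chain (pair_claim (guarantees R1) (guarantees R2)) M"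
    and "\<forall>((x1, x2), c, d) \<in> set M. cosafe x1 \<and> cosafe x2 \<and> cosafe c \<and> cosafe d"
proof -
  have wf: "wf_chain T1" "wf_chain T2"
    and sound: "sound_chain (guarantees R1) T1" "sound_chain (guarantees R2) T2"
    using rep T by (auto simp: represents_def)
  show "M \<noteq> []" using wf merge_chains_Nil_iff[OF M] by (auto simp: wf_chain_def)
  show "sound_chain (pair_claim (guarantees R1) (guarantees R2)) M"
    using sound_chain_merge_chains[OF sound M] .
  show "\<forall>((x1, x2), c, d) \<in> set M. cosafe x1 \<and> cosafe x2 \<and> cosafe c \<and> cosafe d"
    using wf merge_chains_entries[where P = cosafe and Q = cosafe, OF M] by (auto simp: wf_chain_def)
qed

lemma represents_merge_complete:
  assumes rep: "represents TT1 R1" "represents TT2 R2"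
  obtains T1 T2 M ps where "T1 \<in> set TT1" "T2 \<in> set TT2" "M \<in> set (merge_chains T1 T2)" "M \<noteq> []"
    "chain_cuts w M ps 0" "last ps = m"
    "\<forall>z \<le> m. (R1 w z m \<longrightarrow> sat_inf w (fst (reader M ps z)) z) \<and> (R2 w z m \<longrightarrow> sat_inf w (snd (reader M ps z)) z)"
proof -
  obtain T1 ps1 where T1: "T1 \<in> set TT1" "chain_cuts w T1 ps1 0" "last ps1 = m"
    and readers1: "\<forall>z \<le> m. R1 w z m \<longrightarrow> sat_inf w (reader T1 ps1 z) z"
    using rep(1) unfolding represents_def complete_chains_def by blast
  obtain T2 ps2 where T2: "T2 \<in> set TT2" "chain_cuts w T2 ps2 0" "last ps2 = m"
    and readers2: "\<forall>z \<le> m. R2 w z m \<longrightarrow> sat_inf w (reader T2 ps2 z) z"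
    using rep(2) unfolding represents_def complete_chains_def by blast
  have ne: "T1 \<noteq> []" "T2 \<noteq> []" using rep T1 T2 represents_nonempty by blast+
  from merge_chains_complete[OF T1(2) T2(2) ne] T1(3) T2(3) obtain M ps where
    M: "M \<in> set (merge_chains T1 T2)" "chain_cuts w M ps 0" "last ps = m"
    and readerM: "\<forall>z \<le> m. reader M ps z = (reader T1 ps1 z, reader T2 ps2 z)"
    by auto
  moreover have "M \<noteq> []" using merge_chains_Nil_iff[OF M(1)] ne by blast
  ultimately show ?thesis using that T1(1) T2(1) readers1 readers2 by simp
qed

definition map_readers :: "('r \<Rightarrow> 's) \<Rightarrow> ('r, 'a) chain \<Rightarrow> ('s, 'a) chain" where
  "map_readers f T = map (\<lambda>(r, c, d). (f r, c, d)) T"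

lemma length_map_readers [simp]: "length (map_readers f T) = length T"
  by (simp add: map_readers_def)

lemma drop_map_readers [simp]: "drop k (map_readers f T) = map_readers f (drop k T)"
  by (simp add: map_readers_def drop_map)

lemma fst_nth_map_readers [simp]: "k < length T \<Longrightarrow> fst (map_readers f T ! k) = f (fst (T ! k))"
  by (auto simp: map_readers_def split: prod.splits)

lemma chain_cuts_map_readers [simp]: "chain_cuts w (map_readers f T) ps a \<longleftrightarrow> chain_cuts w T ps a"
  unfolding map_readers_def by (induction w T ps a rule: chain_cuts.induct) auto

lemma reader_map_readers:
  "length ps = length T \<Longrightarrow> T \<noteq> [] \<Longrightarrow> reader (map_readers f T) ps z = f (reader T ps z)"
  by (induction T ps z rule: reader.induct) (auto simp: map_readers_def)

lemma sound_chain_map_readers: "sound_chain S (map_readers f T) \<longleftrightarrow> sound_chain (\<lambda>r. S (f r)) T"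
  unfolding sound_chain_def by simp

lemma sound_chain_mono:
  "sound_chain S T \<Longrightarrow> (\<And>r w z m. S r w z m \<Longrightarrow> S' r w z m) \<Longrightarrow> sound_chain S' T"
  unfolding sound_chain_def by blast

definition combine_chains ::
  "('a ltl \<Rightarrow> 'a ltl \<Rightarrow> 'a ltl) \<Rightarrow> ('a ltl, 'a) chain list \<Rightarrow> ('a ltl, 'a) chain list \<Rightarrow> ('a ltl, 'a) chain list" where
  "combine_chains f TT1 TT2 = [map_readers (case_prod f) M. T1 \<leftarrow> TT1, T2 \<leftarrow> TT2, M \<leftarrow> merge_chains T1 T2]"

lemma represents_combine_chains:
  assumes rep: "represents TT1 R1" "represents TT2 R2"
    and cosafe: "\<And>x y. cosafe x \<Longrightarrow> cosafe y \<Longrightarrow> cosafe (f x y)"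
    and sound: "\<And>w z m x y. guarantees R1 x w z m \<Longrightarrow> guarantees R2 y w z m \<Longrightarrow> guarantees R (f x y) w z m"
    and complete: "\<And>w z m x y. (R1 w z m \<longrightarrow> sat_inf w x z) \<Longrightarrow> (R2 w z m \<longrightarrow> sat_inf w y z) \<Longrightarrow> R w z m \<Longrightarrow>
      sat_inf w (f x y) z"
  shows "represents (combine_chains f TT1 TT2) R"
  unfolding represents_def
proof (rule conjI[OF ballI])
  fix T assume "T \<in> set (combine_chains f TT1 TT2)"
  then obtain T1 T2 M where T: "T1 \<in> set TT1" "T2 \<in> set TT2" and M: "M \<in> set (merge_chains T1 T2)"
    and T_def: "T = map_readers (case_prod f) M"
    by (auto simp: combine_chains_def)
  note merged = represents_merge_sound[OF rep T M]
  have "sound_chain (guarantees R) T"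
    using merged(2) unfolding T_def sound_chain_map_readers
    by (rule sound_chain_mono) (auto simp: pair_claim_def sound)
  moreover have "wf_chain T"
    using merged(1,3) cosafe by (auto simp: wf_chain_def T_def map_readers_def)
  ultimately show "wf_chain T \<and> sound_chain (guarantees R) T" by simp
next
  show "complete_chains R (combine_chains f TT1 TT2)"
    unfolding complete_chains_def
  proof (intro allI)
    fix w m
    obtain T1 T2 M ps where M: "T1 \<in> set TT1" "T2 \<in> set TT2" "M \<in> set (merge_chains T1 T2)" "M \<noteq> []"
      "chain_cuts w M ps 0" "last ps = m"
      and readers: "\<forall>z \<le> m. (R1 w z m \<longrightarrow> sat_inf w (fst (reader M ps z)) z) \<and>
        (R2 w z m \<longrightarrow> sat_inf w (snd (reader M ps z)) z)"
      using represents_merge_complete[OF rep] by blast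
    have "reader (map_readers (case_prod f) M) ps z = case_prod f (reader M ps z)" for z
      by (rule reader_map_readers[OF chain_cuts_length[OF M(5)] M(4)])
    then have "sat_inf w (reader (map_readers (case_prod f) M) ps z) z" if "z \<le> m" "R w z m" for z
      using complete[of w z m] readers that by (simp add: case_prod_beta)
    moreover have "map_readers (case_prod f) M \<in> set (combine_chains f TT1 TT2)"
      using M by (auto simp: combine_chains_def)
    ultimately show "\<exists>T \<in> set (combine_chains f TT1 TT2). \<exists>ps. chain_cuts w T ps 0 \<and> last ps = m \<and>
        (\<forall>z \<le> m. R w z m \<longrightarrow> sat_inf w (reader T ps z) z)"
      using M by (intro bexI[of _ "map_readers (case_prod f) M"] exI[of _ ps]) auto
  qed
qed

definition wuntil_rel :: "bool \<Rightarrow> 'a word_rel \<Rightarrow> 'a word_rel \<Rightarrow> 'a word_rel" where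
  "wuntil_rel weak R1 R2 w z m \<longleftrightarrow>
     (\<exists>j. z \<le> j \<and> j \<le> m \<and> R2 w j m \<and> (\<forall>y. z \<le> y \<and> y < j \<longrightarrow> R1 w y m)) \<or>
     (weak \<and> (\<forall>y. z \<le> y \<and> y \<le> m \<longrightarrow> R1 w y m))"

lemma wuntil_rel_Suc_end: "wuntil_rel weak R1 R2 w (Suc m) m \<longleftrightarrow> weak"
  by (auto simp: wuntil_rel_def)

lemma wuntil_rel_extend:
  assumes "wuntil_rel weak R1 R2 w (Suc b) m" and R1: "\<forall>y. z \<le> y \<and> y \<le> b \<longrightarrow> R1 w y m" and "z \<le> b"
  shows "wuntil_rel weak R1 R2 w z m"
proof -
  from assms(1) consider
      (until) j where "Suc b \<le> j" "j \<le> m" "R2 w j m" "\<forall>y. Suc b \<le> y \<and> y < j \<longrightarrow> R1 w y m"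
    | (always) "weak" "\<forall>y. Suc b \<le> y \<and> y \<le> m \<longrightarrow> R1 w y m"
    unfolding wuntil_rel_def by blast
  then show ?thesis
  proof cases
    case until
    then have "\<forall>y. z \<le> y \<and> y < j \<longrightarrow> R1 w y m" using R1 not_less_eq_eq by blast
    then show ?thesis using until \<open>z \<le> b\<close> unfolding wuntil_rel_def by (intro disjI1 exI[of _ j]) auto
  next
    case always
    then have "\<forall>y. z \<le> y \<and> y \<le> m \<longrightarrow> R1 w y m" using R1 not_less_eq_eq by blast
    then show ?thesis using always unfolding wuntil_rel_def by blast
  qed
qed

definition until_within :: "(nat \<Rightarrow> 'a set) \<Rightarrow> 'a ltl \<Rightarrow> 'a ltl \<Rightarrow> nat \<Rightarrow> nat \<Rightarrow> bool" where
  "until_within w \<phi>1 \<phi>2 z b \<longleftrightarrow> (\<exists>j. z \<le> j \<and> j \<le> b \<and> sat_inf w \<phi>2 j \<and> (\<forall>y. z \<le> y \<and> y < j \<longrightarrow> sat_inf w \<phi>1 y))"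

lemma wuntil_rel_segment:
  assumes readers: "\<forall>y. z \<le> y \<and> y \<le> b \<longrightarrow> (sat_inf w \<phi>1 y \<longrightarrow> R1 w y m) \<and> (sat_inf w \<phi>2 y \<longrightarrow> R2 w y m)"
    and "z \<le> b" "b \<le> m"
    and "until_within w \<phi>1 \<phi>2 z b \<or> ((\<forall>y. z \<le> y \<and> y \<le> b \<longrightarrow> sat_inf w \<phi>1 y) \<and> wuntil_rel weak R1 R2 w (Suc b) m)"
  shows "wuntil_rel weak R1 R2 w z m"
  using assms(4)
proof
  assume "until_within w \<phi>1 \<phi>2 z b"
  then obtain j where j: "z \<le> j" "j \<le> b" "sat_inf w \<phi>2 j" "\<forall>y. z \<le> y \<and> y < j \<longrightarrow> sat_inf w \<phi>1 y"
    unfolding until_within_def by blast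
  then have "R2 w j m" "\<forall>y. z \<le> y \<and> y < j \<longrightarrow> R1 w y m" using readers by auto
  then show ?thesis using j \<open>b \<le> m\<close> unfolding wuntil_rel_def by (intro disjI1 exI[of _ j]) auto
next
  assume "(\<forall>y. z \<le> y \<and> y \<le> b \<longrightarrow> sat_inf w \<phi>1 y) \<and> wuntil_rel weak R1 R2 w (Suc b) m"
  then show ?thesis using readers \<open>z \<le> b\<close> wuntil_rel_extend by blast
qed

lemma wuntil_rel_segment_complete:
  assumes readers: "\<forall>y. z \<le> y \<and> y \<le> b \<longrightarrow> (R1 w y m \<longrightarrow> sat_inf w \<phi>1 y) \<and> (R2 w y m \<longrightarrow> sat_inf w \<phi>2 y)"
    and "wuntil_rel weak R1 R2 w z m" and "z \<le> b" "b \<le> m"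
  shows "until_within w \<phi>1 \<phi>2 z b \<or> ((\<forall>y. z \<le> y \<and> y \<le> b \<longrightarrow> sat_inf w \<phi>1 y) \<and> wuntil_rel weak R1 R2 w (Suc b) m)"
proof -
  from assms(2) consider
      (until) j where "z \<le> j" "j \<le> m" "R2 w j m" "\<forall>y. z \<le> y \<and> y < j \<longrightarrow> R1 w y m"
    | (always) "weak" "\<forall>y. z \<le> y \<and> y \<le> m \<longrightarrow> R1 w y m"
    unfolding wuntil_rel_def by blast
  then show ?thesis
  proof cases
    case until
    show ?thesis
    proof (cases "j \<le> b")
      case True
      then show ?thesis using until readers unfolding until_within_def by (intro disjI1 exI[of _ j]) auto
    next
      case False
      then have "wuntil_rel weak R1 R2 w (Suc b) m"
        using until \<open>z \<le> b\<close> unfolding wuntil_rel_def by (intro disjI1 exI[of _ j]) auto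
      then show ?thesis using until False readers by auto
    qed
  next
    case always
    then have "wuntil_rel weak R1 R2 w (Suc b) m" using \<open>z \<le> b\<close> unfolding wuntil_rel_def by auto
    then show ?thesis using always readers \<open>b \<le> m\<close> by auto
  qed
qed

text \<open>Up to the last
  position where \<open>\<phi>2\<close> holds, the reader is \<open>\<phi>1 U \<phi>2\<close>. After it the relation can only hold by
  reaching the next segment, which \<open>\<beta>\<close> and the formula \<open>\<delta>\<close> at the cut account for: the reader is
  false up to the last position where \<open>\<phi>1\<close> fails and the constant \<open>\<beta>\<close> after it.\<close>

definition globally_chains :: "bool \<Rightarrow> 'a ltl \<Rightarrow> 'a ltl \<Rightarrow> 'a ltl \<Rightarrow> 'a ltl \<Rightarrow> ('a ltl, 'a) chain list" where
  "globally_chains \<beta> \<delta> \<phi>1 c d = (let g = if \<beta> then tt else ff in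
     [[(g, And c \<phi>1, And (And d \<phi>1) \<delta>)], [(ff, c, c), (g, And c \<phi>1, And (And d \<phi>1) \<delta>)], [(ff, c, d)]])"

definition until_chains :: "bool \<Rightarrow> 'a ltl \<Rightarrow> 'a ltl \<Rightarrow> 'a ltl \<Rightarrow> 'a ltl \<Rightarrow> 'a ltl \<Rightarrow> ('a ltl, 'a) chain list" where
  "until_chains \<beta> \<delta> \<phi>1 \<phi>2 c d = globally_chains \<beta> \<delta> \<phi>1 c d @ [[(Until \<phi>1 \<phi>2, c, And d \<phi>2)]] @
     map (Cons (Until \<phi>1 \<phi>2, c, And c \<phi>2)) (globally_chains \<beta> \<delta> \<phi>1 c d)"

lemma globally_chains_ne: "V \<in> set (globally_chains \<beta> \<delta> \<phi>1 c d) \<Longrightarrow> V \<noteq> []"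
  by (auto simp: globally_chains_def Let_def)

lemma until_chains_ne: "V \<in> set (until_chains \<beta> \<delta> \<phi>1 \<phi>2 c d) \<Longrightarrow> V \<noteq> []"
  by (auto simp: until_chains_def dest: globally_chains_ne)

lemma globally_chains_sound:
  assumes V: "V \<in> set (globally_chains \<beta> \<delta> \<phi>1 c d)" and "k < length V" and cuts: "chain_cuts w (drop k V) ps z"
  shows "(\<forall>y. z \<le> y \<and> y < last ps \<longrightarrow> sat_inf w c y) \<and> sat_inf w d (last ps) \<and>
    (sat_inf w (fst (V ! k)) z \<longrightarrow> \<beta> \<and> (\<forall>y. z \<le> y \<and> y \<le> last ps \<longrightarrow> sat_inf w \<phi>1 y) \<and> sat_inf w \<delta> (last ps))"
proof -
  let ?g = "(if \<beta> then tt else ff, And c \<phi>1, And (And d \<phi>1) \<delta>) :: 'a ltl \<times> 'a ltl \<times> 'a ltl"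
  have g: "(\<forall>y. z' \<le> y \<and> y < last qs \<longrightarrow> sat_inf w c y) \<and> sat_inf w d (last qs) \<and>
      (sat_inf w (fst ?g) z' \<longrightarrow> \<beta> \<and> (\<forall>y. z' \<le> y \<and> y \<le> last qs \<longrightarrow> sat_inf w \<phi>1 y) \<and> sat_inf w \<delta> (last qs))"
    if "chain_cuts w [?g] qs z'" for qs z'
    using that by (auto simp: chain_cuts_Cons_iff le_less)
  from V consider "V = [?g]" | "V = [(ff, c, c), ?g]" | "V = [(ff, c, d)]"
    by (auto simp: globally_chains_def Let_def)
  then show ?thesis
  proof cases
    case 1
    then have cuts_g: "chain_cuts w [?g] ps z" and nth_g: "V ! k = ?g" using cuts \<open>k < length V\<close> by auto
    show ?thesis unfolding nth_g by (rule g[OF cuts_g])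
  next
    case 2
    show ?thesis
    proof (cases k)
      case 0
      from cuts 2 0 obtain l ps' where ps: "ps = l # ps'" "z \<le> l" "\<forall>y. z \<le> y \<and> y < l \<longrightarrow> sat_inf w c y"
        "sat_inf w c l" and cuts': "chain_cuts w [?g] ps' (Suc l)"
        by (auto simp: chain_cuts_Cons_iff)
      have "ps' \<noteq> []" "Suc l \<le> last ps'" using cuts' chain_cuts_ne chain_cuts_last_ge by fastforce+
      moreover have "\<forall>y. z \<le> y \<and> y < last ps' \<longrightarrow> sat_inf w c y"
        using g[OF cuts'] ps(3,4) by (metis Suc_leI le_neq_implies_less not_le)
      ultimately show ?thesis using g[OF cuts'] 2 0 ps by auto
    next
      case (Suc k')
      then have cuts_g: "chain_cuts w [?g] ps z" and nth_g: "V ! k = ?g" using cuts 2 \<open>k < length V\<close> by auto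
      show ?thesis unfolding nth_g by (rule g[OF cuts_g])
    qed
  next
    case 3
    then show ?thesis using cuts \<open>k < length V\<close> by (cases ps) auto
  qed
qed

lemma until_within_if_Until:
  assumes "sat_inf w (Until \<phi>1 \<phi>2) z" and "z \<le> q" "q \<le> b" "sat_inf w \<phi>2 q"
  shows "until_within w \<phi>1 \<phi>2 z b"
proof -
  obtain j where j: "z \<le> j" "sat_inf w \<phi>2 j" "\<forall>y. z \<le> y \<and> y < j \<longrightarrow> sat_inf w \<phi>1 y"
    using assms(1) by auto
  show ?thesis unfolding until_within_def
  proof (cases "j \<le> q")
    case True
    then show "\<exists>j. z \<le> j \<and> j \<le> b \<and> sat_inf w \<phi>2 j \<and> (\<forall>y. z \<le> y \<and> y < j \<longrightarrow> sat_inf w \<phi>1 y)"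
      using j \<open>q \<le> b\<close> by (intro exI[of _ j]) auto
  next
    case False
    then show "\<exists>j. z \<le> j \<and> j \<le> b \<and> sat_inf w \<phi>2 j \<and> (\<forall>y. z \<le> y \<and> y < j \<longrightarrow> sat_inf w \<phi>1 y)"
      using j assms(2-4) by (intro exI[of _ q]) auto
  qed
qed

lemma until_chains_sound:
  assumes V: "V \<in> set (until_chains \<beta> \<delta> \<phi>1 \<phi>2 c d)" and k: "k < length V" and cuts: "chain_cuts w (drop k V) ps z"
  shows "(\<forall>y. z \<le> y \<and> y < last ps \<longrightarrow> sat_inf w c y) \<and> sat_inf w d (last ps) \<and>
    (sat_inf w (fst (V ! k)) z \<longrightarrow> until_within w \<phi>1 \<phi>2 z (last ps) \<or>
       (\<beta> \<and> (\<forall>y. z \<le> y \<and> y \<le> last ps \<longrightarrow> sat_inf w \<phi>1 y) \<and> sat_inf w \<delta> (last ps)))"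
proof -
  from V consider (globally) "V \<in> set (globally_chains \<beta> \<delta> \<phi>1 c d)"
    | (until) "V = [(Until \<phi>1 \<phi>2, c, And d \<phi>2)]"
    | (until_globally) G where "G \<in> set (globally_chains \<beta> \<delta> \<phi>1 c d)" "V = (Until \<phi>1 \<phi>2, c, And c \<phi>2) # G"
    by (auto simp: until_chains_def)
  then show ?thesis
  proof cases
    case globally
    then show ?thesis using globally_chains_sound[OF globally k cuts] by blast
  next
    case until
    with k cuts obtain p where "ps = [p]" "z \<le> p" "\<forall>y. z \<le> y \<and> y < p \<longrightarrow> sat_inf w c y"
      "sat_inf w d p" "sat_inf w \<phi>2 p"
      by (auto simp: chain_cuts_Cons_iff)
    then show ?thesis using until k until_within_if_Until[of w \<phi>1 \<phi>2 z p p] by simp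
  next
    case until_globally
    show ?thesis
    proof (cases k)
      case 0
      from cuts until_globally 0 obtain q ps' where ps: "ps = q # ps'" "z \<le> q"
        "\<forall>y. z \<le> y \<and> y < q \<longrightarrow> sat_inf w c y" "sat_inf w c q" "sat_inf w \<phi>2 q"
        and cuts': "chain_cuts w G ps' (Suc q)"
        by (auto simp: chain_cuts_Cons_iff)
      have "G \<noteq> []" using until_globally(1) by (rule globally_chains_ne)
      then have "ps' \<noteq> []" "Suc q \<le> last ps'" using cuts' chain_cuts_ne chain_cuts_last_ge by blast+
      moreover have c_after: "\<forall>y. Suc q \<le> y \<and> y < last ps' \<longrightarrow> sat_inf w c y" and "sat_inf w d (last ps')"
        using globally_chains_sound[OF until_globally(1), of 0 w ps' "Suc q"] cuts' \<open>G \<noteq> []\<close> by simp_all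
      moreover have "sat_inf w c y" if "z \<le> y" "y < last ps" for y
        using ps(3,4) c_after that ps(1) \<open>ps' \<noteq> []\<close> by (cases y q rule: linorder_cases) auto
      moreover have "sat_inf w (fst (V ! k)) z \<Longrightarrow> until_within w \<phi>1 \<phi>2 z (last ps)"
        using until_globally 0 ps calculation until_within_if_Until[of w \<phi>1 \<phi>2 z q "last ps"] by simp
      ultimately show ?thesis using ps(1) by auto
    next
      case (Suc k')
      then show ?thesis using globally_chains_sound[OF until_globally(1), of k' w ps z] k cuts until_globally(2)
        by simp
    qed
  qed
qed

lemma last_in_interval:
  fixes a b :: nat
  assumes "\<exists>y. a \<le> y \<and> y \<le> b \<and> Q y"
  obtains l where "a \<le> l" "l \<le> b" "Q l" "\<forall>y. l < y \<and> y \<le> b \<longrightarrow> \<not> Q y"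
proof -
  let ?L = "{y. a \<le> y \<and> y \<le> b \<and> Q y}"
  have fin: "finite ?L" by (rule finite_subset[of _ "{a..b}"]) auto
  have "Max ?L \<in> ?L" using Max_in[OF fin] assms by blast
  moreover have "\<not> Q y" if "Max ?L < y" "y \<le> b" for y
  proof
    assume "Q y"
    then have "y \<in> ?L" using that \<open>Max ?L \<in> ?L\<close> by auto
    then show False using Max_ge[OF fin] that(1) by fastforce
  qed
  ultimately show ?thesis using that[of "Max ?L"] by blast
qed

lemma first_in_interval:
  fixes a b :: nat
  assumes "\<exists>y. a \<le> y \<and> y \<le> b \<and> Q y"
  obtains l where "a \<le> l" "l \<le> b" "Q l" "\<forall>y. a \<le> y \<and> y < l \<longrightarrow> \<not> Q y"
proof -
  let ?l = "LEAST y. a \<le> y \<and> y \<le> b \<and> Q y"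
  have "a \<le> ?l \<and> ?l \<le> b \<and> Q ?l" using LeastI_ex[OF assms] .
  moreover have "\<not> Q y" if "a \<le> y" "y < ?l" for y
    using not_less_Least[OF that(2)] that calculation by auto
  ultimately show ?thesis using that by blast
qed

lemma globally_chains_complete:
  assumes "a \<le> b" and c: "\<forall>y. a \<le> y \<and> y < b \<longrightarrow> sat_inf w c y" and "sat_inf w d b" "sat_inf w \<delta> b"
    and P: "\<forall>z. a \<le> z \<and> z \<le> b \<longrightarrow> P z \<longrightarrow> \<beta> \<and> (\<forall>y. z \<le> y \<and> y \<le> b \<longrightarrow> sat_inf w \<phi>1 y)"
  shows "\<exists>V \<in> set (globally_chains \<beta> \<delta> \<phi>1 c d). \<exists>ps. chain_cuts w V ps a \<and> last ps = b \<and>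
    (\<forall>z. a \<le> z \<and> z \<le> b \<longrightarrow> P z \<longrightarrow> sat_inf w (reader V ps z) z)"
proof (cases "\<exists>y. a \<le> y \<and> y \<le> b \<and> \<not> sat_inf w \<phi>1 y")
  case False
  let ?V = "[(if \<beta> then tt else ff, And c \<phi>1, And (And d \<phi>1) \<delta>)]"
  have "?V \<in> set (globally_chains \<beta> \<delta> \<phi>1 c d)" by (simp add: globally_chains_def)
  moreover have "chain_cuts w ?V [b] a" using False assms by auto
  ultimately show ?thesis using P by (intro bexI[of _ ?V] exI[of _ "[b]"]) auto
next
  case True
  then obtain l where l: "a \<le> l" "l \<le> b" "\<not> sat_inf w \<phi>1 l" and after: "\<forall>y. l < y \<and> y \<le> b \<longrightarrow> sat_inf w \<phi>1 y"
    by (rule last_in_interval) blast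
  have noP: "\<not> P z" if "a \<le> z" "z \<le> l" for z
    using P that l by auto
  show ?thesis
  proof (cases "l = b")
    case True
    let ?V = "[(ff, c, d)]"
    have "?V \<in> set (globally_chains \<beta> \<delta> \<phi>1 c d)" by (simp add: globally_chains_def)
    moreover have "chain_cuts w ?V [b] a" using assms by auto
    ultimately show ?thesis using noP True by (intro bexI[of _ ?V] exI[of _ "[b]"]) auto
  next
    case False
    let ?V = "[(ff, c, c), (if \<beta> then tt else ff, And c \<phi>1, And (And d \<phi>1) \<delta>)]"
    have "?V \<in> set (globally_chains \<beta> \<delta> \<phi>1 c d)" by (simp add: globally_chains_def)
    moreover have "chain_cuts w ?V [l, b] a" using l False c after assms by auto
    moreover have "sat_inf w (reader ?V [l, b] z) z" if "a \<le> z" "z \<le> b" "P z" for z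
      using noP[of z] P that by (cases "z \<le> l") auto
    ultimately show ?thesis by (intro bexI[of _ ?V] exI[of _ "[l, b]"]) auto
  qed
qed

lemma until_chains_complete:
  assumes "a \<le> b" and c: "\<forall>y. a \<le> y \<and> y < b \<longrightarrow> sat_inf w c y" and "sat_inf w d b" "sat_inf w \<delta> b"
    and P: "\<forall>z. a \<le> z \<and> z \<le> b \<longrightarrow> P z \<longrightarrow>
      until_within w \<phi>1 \<phi>2 z b \<or> (\<beta> \<and> (\<forall>y. z \<le> y \<and> y \<le> b \<longrightarrow> sat_inf w \<phi>1 y))"
  shows "\<exists>V \<in> set (until_chains \<beta> \<delta> \<phi>1 \<phi>2 c d). \<exists>ps. chain_cuts w V ps a \<and> last ps = b \<and>
    (\<forall>z. a \<le> z \<and> z \<le> b \<longrightarrow> P z \<longrightarrow> sat_inf w (reader V ps z) z)"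
proof (cases "\<exists>j. a \<le> j \<and> j \<le> b \<and> sat_inf w \<phi>2 j")
  case False
  then have "\<not> until_within w \<phi>1 \<phi>2 z b" if "a \<le> z" for z
    using that unfolding until_within_def by auto
  then have "\<forall>z. a \<le> z \<and> z \<le> b \<longrightarrow> P z \<longrightarrow> \<beta> \<and> (\<forall>y. z \<le> y \<and> y \<le> b \<longrightarrow> sat_inf w \<phi>1 y)"
    using P by blast
  from globally_chains_complete[OF assms(1-4) this] show ?thesis by (auto simp: until_chains_def)
next
  case True
  then obtain q where q: "a \<le> q" "q \<le> b" "sat_inf w \<phi>2 q"
    and after: "\<forall>y. q < y \<and> y \<le> b \<longrightarrow> \<not> sat_inf w \<phi>2 y"
    by (rule last_in_interval) blast
  have until: "sat_inf w (Until \<phi>1 \<phi>2) z" if "a \<le> z" "z \<le> q" "P z" for z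
  proof -
    from P that q consider "until_within w \<phi>1 \<phi>2 z b" | "\<forall>y. z \<le> y \<and> y \<le> b \<longrightarrow> sat_inf w \<phi>1 y" by auto
    then show ?thesis
    proof cases
      case 2
      then show ?thesis using q that by (intro sat_inf.simps(6)[THEN iffD2] exI[of _ q]) auto
    qed (auto simp: until_within_def)
  qed
  show ?thesis
  proof (cases "q = b")
    case True
    let ?V = "[(Until \<phi>1 \<phi>2, c, And d \<phi>2)]"
    have "?V \<in> set (until_chains \<beta> \<delta> \<phi>1 \<phi>2 c d)" by (simp add: until_chains_def)
    moreover have "chain_cuts w ?V [b] a" using assms q True by auto
    ultimately show ?thesis using until True by (intro bexI[of _ ?V] exI[of _ "[b]"]) auto
  next
    case False
    have "\<not> until_within w \<phi>1 \<phi>2 z b" if "Suc q \<le> z" for z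
      using after that unfolding until_within_def by auto
    moreover have "a \<le> z" if "Suc q \<le> z" for z using that q by simp
    ultimately have Pg: "\<forall>z. Suc q \<le> z \<and> z \<le> b \<longrightarrow> P z \<longrightarrow> \<beta> \<and> (\<forall>y. z \<le> y \<and> y \<le> b \<longrightarrow> sat_inf w \<phi>1 y)"
      using P by blast
    have "Suc q \<le> b" and cg: "\<forall>y. Suc q \<le> y \<and> y < b \<longrightarrow> sat_inf w c y" using q False c by auto
    from globally_chains_complete[OF this assms(3,4) Pg] obtain G psG where
      G: "G \<in> set (globally_chains \<beta> \<delta> \<phi>1 c d)" "chain_cuts w G psG (Suc q)" "last psG = b"
      and readersG: "\<forall>z. Suc q \<le> z \<and> z \<le> b \<longrightarrow> P z \<longrightarrow> sat_inf w (reader G psG z) z"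
      by blast
    have "G \<noteq> []" "psG \<noteq> []" using G globally_chains_ne chain_cuts_ne by blast+
    let ?V = "(Until \<phi>1 \<phi>2, c, And c \<phi>2) # G"
    have "?V \<in> set (until_chains \<beta> \<delta> \<phi>1 \<phi>2 c d)" using G(1) by (simp add: until_chains_def)
    moreover have "chain_cuts w ?V (q # psG) a" using q False c G(2) by auto
    moreover have "sat_inf w (reader ?V (q # psG) z) z" if "a \<le> z" "z \<le> b" "P z" for z
      using until[of z] readersG \<open>G \<noteq> []\<close> that by (cases "z \<le> q") auto
    ultimately show ?thesis using G(3) \<open>psG \<noteq> []\<close> by (intro bexI[of _ ?V] exI[of _ "q # psG"]) auto
  qed
qed

text \<open>Whether the relation holds just after a segment is known for the last segment (iff \<open>weak\<close>);
  otherwise the first reader of the refined remaining segments tells it, one position later.\<close>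

fun wuntil_refine :: "bool \<Rightarrow> ('a ltl \<times> 'a ltl, 'a) chain \<Rightarrow> ('a ltl, 'a) chain list" where
  "wuntil_refine weak [] = [[]]"
| "wuntil_refine weak (((\<phi>1, \<phi>2), c, d) # rest) =
     [V @ R'. R' \<leftarrow> wuntil_refine weak rest,
       V \<leftarrow> (if R' = [] then until_chains weak tt \<phi>1 \<phi>2 c d
            else until_chains False tt \<phi>1 \<phi>2 c d @ until_chains True (Next (fst (hd R'))) \<phi>1 \<phi>2 c d)]"

lemma wuntil_refine_Nil_iff: "T' \<in> set (wuntil_refine weak M) \<Longrightarrow> T' = [] \<longleftrightarrow> M = []"
  by (induction weak M arbitrary: T' rule: wuntil_refine.induct) (auto dest: until_chains_ne split: if_splits)

lemma chain_cuts_wuntil_refine: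
  "T' \<in> set (wuntil_refine weak M) \<Longrightarrow> chain_cuts w T' ps a \<Longrightarrow> \<exists>psM. chain_cuts w M psM a \<and> last psM = last ps"
proof (induction weak M arbitrary: T' ps a rule: wuntil_refine.induct)
  case (2 weak \<phi>1 \<phi>2 c d rest)
  from "2.prems"(1) obtain V R' where T': "T' = V @ R'" and R': "R' \<in> set (wuntil_refine weak rest)"
    and V: "V \<in> set (until_chains weak tt \<phi>1 \<phi>2 c d) \<or> V \<in> set (until_chains False tt \<phi>1 \<phi>2 c d) \<or>
      V \<in> set (until_chains True (Next (fst (hd R'))) \<phi>1 \<phi>2 c d)"
    by (auto split: if_splits)
  then obtain \<beta> \<delta> where V: "V \<in> set (until_chains \<beta> \<delta> \<phi>1 \<phi>2 c d)" by blast
  then have "V \<noteq> []" by (rule until_chains_ne)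
  with "2.prems"(2) T' obtain psV psR where ps: "ps = psV @ psR" and cutsV: "chain_cuts w V psV a"
    and cutsR: "chain_cuts w R' psR (Suc (last psV))"
    using chain_cuts_appendD by blast
  from "2.IH"[OF R' cutsR] obtain psM where psM: "chain_cuts w rest psM (Suc (last psV))" "last psM = last psR"
    by blast
  have "(\<forall>y. a \<le> y \<and> y < last psV \<longrightarrow> sat_inf w c y) \<and> sat_inf w d (last psV)"
    using until_chains_sound[OF V, of 0 w psV a] cutsV \<open>V \<noteq> []\<close> by simp
  moreover have "a \<le> last psV" using chain_cuts_last_ge[OF cutsV \<open>V \<noteq> []\<close>] .
  moreover have "psM = [] \<longleftrightarrow> psR = []"
    using chain_cuts_length[OF psM(1)] chain_cuts_length[OF cutsR] wuntil_refine_Nil_iff[OF R'] by auto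
  ultimately show ?case using psM ps cutsR by (intro exI[of _ "last psV # psM"]) auto
qed simp

lemma wuntil_refine_segment_sound:
  assumes sound: "sound_chain (pair_claim (guarantees R1) (guarantees R2)) (((\<phi>1, \<phi>2), c, d) # rest)"
    and V: "V \<in> set (until_chains \<beta> \<delta> \<phi>1 \<phi>2 c d)" and k: "k < length V"
    and cutsV: "chain_cuts w (drop k V) psV z" and cuts_rest: "chain_cuts w rest psM (Suc (last psV))"
    and m: "last (last psV # psM) = m"
    and after: "\<beta> \<Longrightarrow> sat_inf w \<delta> (last psV) \<Longrightarrow> wuntil_rel weak R1 R2 w (Suc (last psV)) m"
  shows "guarantees (wuntil_rel weak R1 R2) (fst (V ! k)) w z m"
  unfolding guarantees_def
proof
  assume r: "sat_inf w (fst (V ! k)) z"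
  define b where "b = last psV"
  have c: "\<forall>y. z \<le> y \<and> y < b \<longrightarrow> sat_inf w c y" and "sat_inf w d b"
    and claim: "until_within w \<phi>1 \<phi>2 z b \<or> (\<beta> \<and> (\<forall>y. z \<le> y \<and> y \<le> b \<longrightarrow> sat_inf w \<phi>1 y) \<and> sat_inf w \<delta> b)"
    using until_chains_sound[OF V k cutsV] r unfolding b_def by auto
  have "z \<le> b" using chain_cuts_last_ge[OF cutsV] k unfolding b_def by simp
  have "b \<le> m"
  proof (cases "psM = []")
    case False
    then have "rest \<noteq> []" using cuts_rest by auto
    then show ?thesis using chain_cuts_last_ge[OF cuts_rest] m False unfolding b_def by simp
  qed (use m b_def in simp)
  have "(sat_inf w \<phi>1 y \<longrightarrow> R1 w y m) \<and> (sat_inf w \<phi>2 y \<longrightarrow> R2 w y m)" if "z \<le> y" "y \<le> b" for y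
  proof -
    have "chain_cuts w (((\<phi>1, \<phi>2), c, d) # rest) (b # psM) y"
      using that c \<open>sat_inf w d b\<close> cuts_rest unfolding b_def by auto
    from sound_chain_hd[OF sound _ this] show ?thesis
      using m unfolding b_def by (simp add: pair_claim_def guarantees_def)
  qed
  then show "wuntil_rel weak R1 R2 w z m"
    using wuntil_rel_segment[OF _ \<open>z \<le> b\<close> \<open>b \<le> m\<close>] claim after unfolding b_def by blast
qed

lemma sound_chain_wuntil_refine:
  assumes "sound_chain (pair_claim (guarantees R1) (guarantees R2)) M" and "T' \<in> set (wuntil_refine weak M)"
  shows "sound_chain (guarantees (wuntil_rel weak R1 R2)) T'"
  using assms
proof (induction weak M arbitrary: T' rule: wuntil_refine.induct)
  case (2 weak \<phi>1 \<phi>2 c d rest)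
  from "2.prems"(2) obtain V R' where T': "T' = V @ R'" and R': "R' \<in> set (wuntil_refine weak rest)"
    and V: "V \<in> set (if R' = [] then until_chains weak tt \<phi>1 \<phi>2 c d
      else until_chains False tt \<phi>1 \<phi>2 c d @ until_chains True (Next (fst (hd R'))) \<phi>1 \<phi>2 c d)"
    by auto
  have sound_R': "sound_chain (guarantees (wuntil_rel weak R1 R2)) R'"
    using "2.IH"[OF _ R'] sound_chain_tl[OF "2.prems"(1)] by simp
  show ?case unfolding T' sound_chain_append
  proof (intro conjI allI impI sound_R')
    fix k w z ps
    assume k: "k < length V" and cuts: "chain_cuts w (drop k V @ R') ps z"
    obtain psV psR where ps: "ps = psV @ psR" and cutsV: "chain_cuts w (drop k V) psV z"
      and cutsR: "chain_cuts w R' psR (Suc (last psV))"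
      using chain_cuts_appendD[OF cuts] k by auto
    obtain psM where psM: "chain_cuts w rest psM (Suc (last psV))" "last psM = last psR"
      using chain_cuts_wuntil_refine[OF R' cutsR] by blast
    have "psM = [] \<longleftrightarrow> psR = []"
      using chain_cuts_length[OF psM(1)] chain_cuts_length[OF cutsR] wuntil_refine_Nil_iff[OF R'] by auto
    then have m: "last (last psV # psM) = last ps" using ps psM by auto
    obtain \<beta> \<delta> where "V \<in> set (until_chains \<beta> \<delta> \<phi>1 \<phi>2 c d)"
      and "\<beta> \<Longrightarrow> sat_inf w \<delta> (last psV) \<Longrightarrow> wuntil_rel weak R1 R2 w (Suc (last psV)) (last ps)"
    proof (cases "R' = []")
      case True
      then show ?thesis using that[of weak tt] V cutsR ps by (simp add: wuntil_rel_Suc_end)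
    next
      case False
      have "psR \<noteq> []" using chain_cuts_ne[OF cutsR False] .
      then have "wuntil_rel weak R1 R2 w (Suc (last psV)) (last ps)" if "sat_inf w (fst (hd R')) (Suc (last psV))"
        using sound_chain_hd[OF sound_R' False cutsR] that ps by (simp add: guarantees_def)
      then show ?thesis using that[of False tt] that[of True "Next (fst (hd R'))"] V False by auto
    qed
    then show "guarantees (wuntil_rel weak R1 R2) (fst (V ! k)) w z (last ps)"
      by (rule wuntil_refine_segment_sound[OF "2.prems"(1) _ k cutsV psM(1) m])
  qed
qed simp

lemma wuntil_refine_complete_Cons:
  assumes cuts: "chain_cuts w (((\<phi>1, \<phi>2), c, d) # rest) (b # psr) a"
    and readers: "\<forall>z. a \<le> z \<and> z \<le> b \<longrightarrow> (R1 w z m \<longrightarrow> sat_inf w \<phi>1 z) \<and> (R2 w z m \<longrightarrow> sat_inf w \<phi>2 z)"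
    and R': "R' \<in> set (wuntil_refine weak rest)" and cuts_R': "chain_cuts w R' psR (Suc b)" and m: "last (b # psR) = m"
    and readers_R': "\<forall>z. Suc b \<le> z \<and> z \<le> m \<longrightarrow> wuntil_rel weak R1 R2 w z m \<longrightarrow> sat_inf w (reader R' psR z) z"
  shows "\<exists>T' \<in> set (wuntil_refine weak (((\<phi>1, \<phi>2), c, d) # rest)). \<exists>ps'. chain_cuts w T' ps' a \<and> last ps' = m \<and>
    (\<forall>z. a \<le> z \<and> z \<le> m \<longrightarrow> wuntil_rel weak R1 R2 w z m \<longrightarrow> sat_inf w (reader T' ps' z) z)"
proof -
  from cuts have "a \<le> b" and c: "\<forall>y. a \<le> y \<and> y < b \<longrightarrow> sat_inf w c y" and "sat_inf w d b" by auto
  have R'_iff: "R' = [] \<longleftrightarrow> psR = []" using chain_cuts_length[OF cuts_R'] by auto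
  have last_R': "Suc b \<le> m" if "R' \<noteq> []" using chain_cuts_last_ge[OF cuts_R' that] m R'_iff that by simp
  then have "b \<le> m" using m R'_iff by (cases "R' = []") auto
  define \<beta> where "\<beta> = wuntil_rel weak R1 R2 w (Suc b) m"
  define \<delta> :: "'a ltl" where "\<delta> = (if \<beta> \<and> R' \<noteq> [] then Next (fst (hd R')) else tt)"
  have "sat_inf w \<delta> b"
  proof (cases "\<beta> \<and> R' \<noteq> []")
    case True
    have "Suc b \<le> hd psR" using chain_cuts_ge[OF cuts_R'] R'_iff True by simp
    then have "reader R' psR (Suc b) = fst (hd R')" using reader_hd[OF cuts_R'] True by blast
    then show ?thesis using readers_R' last_R' True unfolding \<delta>_def \<beta>_def by auto
  next
    case False
    then show ?thesis unfolding \<delta>_def by (simp only: if_not_P if_False sat_inf_tt)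
  qed
  have "until_within w \<phi>1 \<phi>2 z b \<or> (\<beta> \<and> (\<forall>y. z \<le> y \<and> y \<le> b \<longrightarrow> sat_inf w \<phi>1 y))"
    if "a \<le> z" "z \<le> b" "wuntil_rel weak R1 R2 w z m" for z
  proof -
    have "\<forall>y. z \<le> y \<and> y \<le> b \<longrightarrow> (R1 w y m \<longrightarrow> sat_inf w \<phi>1 y) \<and> (R2 w y m \<longrightarrow> sat_inf w \<phi>2 y)"
      using readers that(1) by auto
    from wuntil_rel_segment_complete[OF this that(3,2) \<open>b \<le> m\<close>] show ?thesis unfolding \<beta>_def by auto
  qed
  then have "\<forall>z. a \<le> z \<and> z \<le> b \<longrightarrow> wuntil_rel weak R1 R2 w z m \<longrightarrow>
      until_within w \<phi>1 \<phi>2 z b \<or> (\<beta> \<and> (\<forall>y. z \<le> y \<and> y \<le> b \<longrightarrow> sat_inf w \<phi>1 y))"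
    by blast
  from until_chains_complete[OF \<open>a \<le> b\<close> c \<open>sat_inf w d b\<close> \<open>sat_inf w \<delta> b\<close> this]
  obtain V psV where V: "V \<in> set (until_chains \<beta> \<delta> \<phi>1 \<phi>2 c d)" and cuts_V: "chain_cuts w V psV a"
    and "last psV = b" and readers_V: "\<forall>z. a \<le> z \<and> z \<le> b \<longrightarrow> wuntil_rel weak R1 R2 w z m \<longrightarrow> sat_inf w (reader V psV z) z"
    by blast
  have "V \<noteq> []" using V by (rule until_chains_ne)
  have "V \<in> set (if R' = [] then until_chains weak tt \<phi>1 \<phi>2 c d
      else until_chains False tt \<phi>1 \<phi>2 c d @ until_chains True (Next (fst (hd R'))) \<phi>1 \<phi>2 c d)"
  proof (cases "R' = []")
    case True
    then have "b = m" using m R'_iff by simp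
    then have "\<beta> = weak" unfolding \<beta>_def by (simp only: wuntil_rel_Suc_end)
    then show ?thesis using V True unfolding \<delta>_def by simp
  next
    case False
    then show ?thesis using V unfolding \<delta>_def by (cases \<beta>) simp_all
  qed
  then have "V @ R' \<in> set (wuntil_refine weak (((\<phi>1, \<phi>2), c, d) # rest))"
    using R' by (auto intro: bexI[OF _ R'])
  moreover have "chain_cuts w (V @ R') (psV @ psR) a \<and> last (psV @ psR) = m \<and>
      (\<forall>z. a \<le> z \<and> z \<le> m \<longrightarrow> wuntil_rel weak R1 R2 w z m \<longrightarrow> sat_inf w (reader (V @ R') (psV @ psR) z) z)"
    using chain_cuts_append_readers[OF cuts_V \<open>V \<noteq> []\<close>] cuts_R' m readers_V readers_R' \<open>last psV = b\<close> by simp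
  ultimately show ?thesis by blast
qed

lemma wuntil_refine_complete:
  assumes "chain_cuts w M ps a" and "M \<noteq> []"
    and "\<forall>z. a \<le> z \<and> z \<le> last ps \<longrightarrow> (R1 w z (last ps) \<longrightarrow> sat_inf w (fst (reader M ps z)) z) \<and>
      (R2 w z (last ps) \<longrightarrow> sat_inf w (snd (reader M ps z)) z)"
  shows "\<exists>T' \<in> set (wuntil_refine weak M). \<exists>ps'. chain_cuts w T' ps' a \<and> last ps' = last ps \<and>
    (\<forall>z. a \<le> z \<and> z \<le> last ps \<longrightarrow> wuntil_rel weak R1 R2 w z (last ps) \<longrightarrow> sat_inf w (reader T' ps' z) z)"
  using assms
proof (induction M arbitrary: ps a)
  case (Cons seg rest)
  obtain \<phi>1 \<phi>2 c d where seg: "seg = ((\<phi>1, \<phi>2), c, d)" by (metis prod.collapse)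
  obtain b psr where ps: "ps = b # psr" and cuts_rest: "chain_cuts w rest psr (Suc b)"
    using Cons.prems(1) seg by (cases ps) auto
  define m where "m = last ps"
  have "b \<le> m" using chain_cuts_hd_le_last[OF Cons.prems(1)] ps unfolding m_def by simp
  have "reader (seg # rest) ps z = (\<phi>1, \<phi>2)" if "z \<le> b" for z using that ps seg by simp
  then have readers: "\<forall>z. a \<le> z \<and> z \<le> b \<longrightarrow> (R1 w z m \<longrightarrow> sat_inf w \<phi>1 z) \<and> (R2 w z m \<longrightarrow> sat_inf w \<phi>2 z)"
    using Cons.prems(3) \<open>b \<le> m\<close> unfolding m_def by fastforce
  obtain R' psR where R': "R' \<in> set (wuntil_refine weak rest)" "chain_cuts w R' psR (Suc b)" "last (b # psR) = m"
    and readers_R': "\<forall>z. Suc b \<le> z \<and> z \<le> m \<longrightarrow> wuntil_rel weak R1 R2 w z m \<longrightarrow> sat_inf w (reader R' psR z) z"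
  proof (cases "rest = []")
    case True
    then have "psr = []" using cuts_rest by simp
    then show ?thesis using that[of "[]" "[]"] True ps unfolding m_def by force
  next
    case False
    have "psr \<noteq> []" using chain_cuts_ne[OF cuts_rest False] .
    have "a \<le> b" using Cons.prems(1) ps seg by simp
    have "(R1 w z (last psr) \<longrightarrow> sat_inf w (fst (reader rest psr z)) z) \<and>
        (R2 w z (last psr) \<longrightarrow> sat_inf w (snd (reader rest psr z)) z)" if "Suc b \<le> z" "z \<le> last psr" for z
    proof -
      have "a \<le> z" "z \<le> last ps" "last ps = last psr" using that \<open>a \<le> b\<close> ps \<open>psr \<noteq> []\<close> by auto
      moreover have "reader (seg # rest) ps z = reader rest psr z" using that ps seg False by simp
      ultimately show ?thesis using Cons.prems(3) by metis
    qed
    then have "\<forall>z. Suc b \<le> z \<and> z \<le> last psr \<longrightarrow> (R1 w z (last psr) \<longrightarrow> sat_inf w (fst (reader rest psr z)) z) \<and>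
        (R2 w z (last psr) \<longrightarrow> sat_inf w (snd (reader rest psr z)) z)" by blast
    from Cons.IH[OF cuts_rest False this] obtain T' ps' where T': "T' \<in> set (wuntil_refine weak rest)"
      "chain_cuts w T' ps' (Suc b)" "last ps' = last psr"
      "\<forall>z. Suc b \<le> z \<and> z \<le> last psr \<longrightarrow> wuntil_rel weak R1 R2 w z (last psr) \<longrightarrow> sat_inf w (reader T' ps' z) z"
      by blast
    moreover have "ps' \<noteq> []" using chain_cuts_ne[OF T'(2)] wuntil_refine_Nil_iff[OF T'(1)] False by blast
    ultimately show ?thesis using that[of T' ps'] ps \<open>psr \<noteq> []\<close> unfolding m_def by simp
  qed
  from wuntil_refine_complete_Cons[OF Cons.prems(1)[unfolded seg ps] readers R' readers_R']
  show ?case unfolding seg m_def by blast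
qed simp

lemma until_chains_entries:
  "V \<in> set (until_chains \<beta> \<delta> \<phi>1 \<phi>2 c d) \<Longrightarrow> cosafe \<phi>1 \<Longrightarrow> cosafe \<phi>2 \<Longrightarrow> cosafe c \<Longrightarrow> cosafe d \<Longrightarrow>
    cosafe \<delta> \<Longrightarrow> \<forall>(r, c, d) \<in> set V. cosafe r \<and> cosafe c \<and> cosafe d"
  by (auto simp: until_chains_def globally_chains_def Let_def)

lemma wuntil_refine_entries:
  "T' \<in> set (wuntil_refine weak M) \<Longrightarrow> \<forall>((x1, x2), c, d) \<in> set M. cosafe x1 \<and> cosafe x2 \<and> cosafe c \<and> cosafe d \<Longrightarrow>
    \<forall>(r, c, d) \<in> set T'. cosafe r \<and> cosafe c \<and> cosafe d"
proof (induction weak M arbitrary: T' rule: wuntil_refine.induct)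
  case (2 weak \<phi>1 \<phi>2 c d rest)
  from "2.prems"(1) obtain V R' where T': "T' = V @ R'" and R': "R' \<in> set (wuntil_refine weak rest)"
    and V: "V \<in> set (if R' = [] then until_chains weak tt \<phi>1 \<phi>2 c d
      else until_chains False tt \<phi>1 \<phi>2 c d @ until_chains True (Next (fst (hd R'))) \<phi>1 \<phi>2 c d)"
    by auto
  have entries_R': "\<forall>(r, c, d) \<in> set R'. cosafe r \<and> cosafe c \<and> cosafe d" using "2.IH"[OF R'] "2.prems"(2) by simp
  then have hd_R': "R' \<noteq> [] \<Longrightarrow> cosafe (fst (hd R'))" by (cases R') auto
  obtain \<beta> \<delta> where V': "V \<in> set (until_chains \<beta> \<delta> \<phi>1 \<phi>2 c d)" and "cosafe \<delta>"
  proof (cases "R' = []")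
    case True
    then show ?thesis using that[of weak tt] V by simp
  next
    case False
    then show ?thesis using that[of False tt] that[of True "Next (fst (hd R'))"] V hd_R' by auto
  qed
  moreover have "cosafe \<phi>1" "cosafe \<phi>2" "cosafe c" "cosafe d" using "2.prems"(2) by auto
  ultimately have "\<forall>(r, c, d) \<in> set V. cosafe r \<and> cosafe c \<and> cosafe d"
    using until_chains_entries[OF V'] by blast
  then show ?case using entries_R' T' by auto
qed simp

definition wuntil_chains :: "bool \<Rightarrow> ('a ltl, 'a) chain list \<Rightarrow> ('a ltl, 'a) chain list \<Rightarrow> ('a ltl, 'a) chain list" where
  "wuntil_chains weak TT1 TT2 = [T'. T1 \<leftarrow> TT1, T2 \<leftarrow> TT2, M \<leftarrow> merge_chains T1 T2, T' \<leftarrow> wuntil_refine weak M]"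

lemma represents_wuntil_chains:
  assumes rep: "represents TT1 R1" "represents TT2 R2"
  shows "represents (wuntil_chains weak TT1 TT2) (wuntil_rel weak R1 R2)"
  unfolding represents_def
proof (rule conjI[OF ballI])
  fix T' assume "T' \<in> set (wuntil_chains weak TT1 TT2)"
  then obtain T1 T2 M where T: "T1 \<in> set TT1" "T2 \<in> set TT2" and M: "M \<in> set (merge_chains T1 T2)"
    and T': "T' \<in> set (wuntil_refine weak M)"
    by (auto simp: wuntil_chains_def)
  note merged = represents_merge_sound[OF rep T M]
  have "sound_chain (guarantees (wuntil_rel weak R1 R2)) T'"
    using sound_chain_wuntil_refine[OF merged(2) T'] .
  moreover have "wf_chain T'"
    using wuntil_refine_entries[OF T' merged(3)] wuntil_refine_Nil_iff[OF T'] merged(1)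
    by (auto simp: wf_chain_def)
  ultimately show "wf_chain T' \<and> sound_chain (guarantees (wuntil_rel weak R1 R2)) T'" by simp
next
  show "complete_chains (wuntil_rel weak R1 R2) (wuntil_chains weak TT1 TT2)"
    unfolding complete_chains_def
  proof (intro allI)
    fix w m
    obtain T1 T2 M ps where M: "T1 \<in> set TT1" "T2 \<in> set TT2" "M \<in> set (merge_chains T1 T2)" "M \<noteq> []"
      "chain_cuts w M ps 0" "last ps = m"
      and readers: "\<forall>z \<le> m. (R1 w z m \<longrightarrow> sat_inf w (fst (reader M ps z)) z) \<and>
        (R2 w z m \<longrightarrow> sat_inf w (snd (reader M ps z)) z)"
      using represents_merge_complete[OF rep] by blast
    then obtain T' ps' where "T' \<in> set (wuntil_refine weak M)" "chain_cuts w T' ps' 0" "last ps' = m"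
      "\<forall>z. 0 \<le> z \<and> z \<le> m \<longrightarrow> wuntil_rel weak R1 R2 w z m \<longrightarrow> sat_inf w (reader T' ps' z) z"
      using wuntil_refine_complete[of w M ps 0 R1 R2 weak] by auto
    moreover have "T' \<in> set (wuntil_chains weak TT1 TT2)" if "T' \<in> set (wuntil_refine weak M)" for T'
      using that M by (auto simp: wuntil_chains_def)
    ultimately show "\<exists>T \<in> set (wuntil_chains weak TT1 TT2). \<exists>ps. chain_cuts w T ps 0 \<and> last ps = m \<and>
        (\<forall>z \<le> m. wuntil_rel weak R1 R2 w z m \<longrightarrow> sat_inf w (reader T ps z) z)"
      by blast
  qed
qed

lemma represents_conj:
  assumes "represents TT1 R1" "represents TT2 R2"
  shows "represents (combine_chains And TT1 TT2) (\<lambda>w z m. R1 w z m \<and> R2 w z m)"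
  by (rule represents_combine_chains[OF assms]) (auto simp: guarantees_def)

lemma represents_disj:
  assumes "represents TT1 R1" "represents TT2 R2"
  shows "represents (combine_chains Or TT1 TT2) (\<lambda>w z m. R1 w z m \<or> R2 w z m)"
  by (rule represents_combine_chains[OF assms]) (auto simp: guarantees_def)

lemma not_until_iff:
  fixes z m :: nat
  shows "\<not> (\<exists>j. z \<le> j \<and> j \<le> m \<and> Q j \<and> (\<forall>k. z \<le> k \<and> k < j \<longrightarrow> P k)) \<longleftrightarrow>
    (\<exists>j. z \<le> j \<and> j \<le> m \<and> \<not> P j \<and> \<not> Q j \<and> (\<forall>k. z \<le> k \<and> k < j \<longrightarrow> \<not> Q k)) \<or> (\<forall>j. z \<le> j \<and> j \<le> m \<longrightarrow> \<not> Q j)"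
    (is "\<not> ?until \<longleftrightarrow> ?fail \<or> ?never")
proof
  assume "\<not> ?until"
  show "?fail \<or> ?never"
  proof (cases ?never)
    case False
    then have "\<exists>j. z \<le> j \<and> j \<le> m \<and> Q j" by blast
    then obtain j where j: "z \<le> j" "j \<le> m" "Q j" and before: "\<forall>k. z \<le> k \<and> k < j \<longrightarrow> \<not> Q k"
      by (rule first_in_interval)
    then obtain k where "z \<le> k" "k < j" "\<not> P k" using \<open>\<not> ?until\<close> by blast
    then show ?thesis using j before by (intro disjI1 exI[of _ k]) auto
  qed simp
next
  assume "?fail \<or> ?never"
  show "\<not> ?until"
  proof
    assume ?until
    then obtain j' where j': "z \<le> j'" "j' \<le> m" "Q j'" "\<forall>k. z \<le> k \<and> k < j' \<longrightarrow> P k" by blast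
    from \<open>?fail \<or> ?never\<close> show False
    proof
      assume ?fail
      then obtain j where "z \<le> j" "\<not> P j" "\<not> Q j" "\<forall>k. z \<le> k \<and> k < j \<longrightarrow> \<not> Q k" by blast
      then show False using j' by (cases j' j rule: linorder_cases) auto
    qed (use j' in blast)
  qed
qed

lemma not_release_iff:
  fixes z m :: nat
  shows "\<not> ((\<forall>j. z \<le> j \<and> j \<le> m \<longrightarrow> Q j) \<or> (\<exists>j. z \<le> j \<and> j \<le> m \<and> P j \<and> Q j \<and> (\<forall>k. z \<le> k \<and> k < j \<longrightarrow> Q k))) \<longleftrightarrow>
    (\<exists>j. z \<le> j \<and> j \<le> m \<and> \<not> Q j \<and> (\<forall>k. z \<le> k \<and> k < j \<longrightarrow> \<not> P k))"
    (is "\<not> (?always \<or> ?release) \<longleftrightarrow> ?until")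
proof
  assume none: "\<not> (?always \<or> ?release)"
  then have "\<exists>j. z \<le> j \<and> j \<le> m \<and> \<not> Q j" by blast
  then obtain j where j: "z \<le> j" "j \<le> m" "\<not> Q j" and before: "\<forall>k. z \<le> k \<and> k < j \<longrightarrow> \<not> \<not> Q k"
    by (rule first_in_interval)
  have "\<not> P k" if "z \<le> k" "k < j" for k
  proof
    assume "P k"
    then have ?release using that before j(2) by (intro exI[of _ k]) auto
    then show False using none by blast
  qed
  then show ?until using j by blast
next
  assume ?until
  then obtain j where j: "z \<le> j" "j \<le> m" "\<not> Q j" "\<forall>k. z \<le> k \<and> k < j \<longrightarrow> \<not> P k" by blast
  show "\<not> (?always \<or> ?release)"
  proof
    assume "?always \<or> ?release"
    then show False
    proof
      assume ?release
      then obtain j' where "z \<le> j'" "P j'" "Q j'" "\<forall>k. z \<le> k \<and> k < j' \<longrightarrow> Q k" by blast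
      then show False using j by (cases j' j rule: linorder_cases) auto
    qed (use j in blast)
  qed
qed

lemma not_sat_fin_Until:
  "\<not> sat_fin w m (Until x y) z \<longleftrightarrow>
    wuntil_rel True (\<lambda>w z m. \<not> sat_fin w m y z) (\<lambda>w z m. \<not> sat_fin w m x z \<and> \<not> sat_fin w m y z) w z m"
  using not_until_iff[of z m "\<lambda>j. sat_fin w m y j" "\<lambda>j. sat_fin w m x j"] by (simp add: wuntil_rel_def)

lemma not_sat_fin_Release:
  "\<not> sat_fin w m (Release x y) z \<longleftrightarrow>
    wuntil_rel False (\<lambda>w z m. \<not> sat_fin w m x z) (\<lambda>w z m. \<not> sat_fin w m y z) w z m"
  using not_release_iff[of z m "\<lambda>j. sat_fin w m y j" "\<lambda>j. sat_fin w m x j"] by (simp add: wuntil_rel_def)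

text \<open>\<open>chains_of b \<psi>\<close> represents "\<open>\<psi>\<close> has truth value \<open>b\<close> on the finite word"; the parameter \<open>b\<close>
  pushes negations to the atoms by the finite-word dualities: the negation of \<open>X x\<close> is the weak next of
  \<open>\<not> x\<close>, \<open>\<not> (x U y)\<close> is \<open>\<not> y\<close> weakly until \<open>\<not> x \<and> \<not> y\<close>, \<open>x R y\<close> is \<open>y\<close> weakly until
  \<open>x \<and> y\<close>, and \<open>\<not> (x R y)\<close> is \<open>\<not> x U \<not> y\<close>.\<close>

primrec chains_of :: "bool \<Rightarrow> 'a ltl \<Rightarrow> ('a ltl, 'a) chain list" where
  "chains_of b (Prop p) = [[(if b then Prop p else Neg (Prop p), tt, tt)]]"
| "chains_of b (Neg x) = chains_of (\<not> b) x"
| "chains_of b (Or x y) = combine_chains (if b then Or else And) (chains_of b x) (chains_of b y)"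
| "chains_of b (And x y) = combine_chains (if b then And else Or) (chains_of b x) (chains_of b y)"
| "chains_of b (Next x) = next_chains (\<not> b) (chains_of b x)"
| "chains_of b (Until x y) = (if b then wuntil_chains False (chains_of True x) (chains_of True y)
     else wuntil_chains True (chains_of False y) (combine_chains And (chains_of False x) (chains_of False y)))"
| "chains_of b (Release x y) = (if b
     then wuntil_chains True (chains_of True y) (combine_chains And (chains_of True x) (chains_of True y))
     else wuntil_chains False (chains_of False x) (chains_of False y))"

lemma represents_chains_of: "represents (chains_of b \<psi>) (\<lambda>w z m. sat_fin w m \<psi> z = b)"
proof (induction \<psi> arbitrary: b)
  case (Prop p)
  have "cosafe (if b then Prop p else Neg (Prop p))" by simp
  from represents_literal[OF this] show ?case unfolding chains_of.simps
    by (rule represents_cong) (cases b, auto)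
next
  case (Neg x)
  from Neg.IH[of "\<not> b"] show ?case unfolding chains_of.simps by (rule represents_cong) auto
next
  case (Or x y)
  show ?case
  proof (cases b)
    case True
    from represents_disj[OF Or.IH[of b]] show ?thesis
      unfolding chains_of.simps if_P[OF True] by (rule represents_cong) (simp add: True)
  next
    case False
    from represents_conj[OF Or.IH[of b]] show ?thesis
      unfolding chains_of.simps if_not_P[OF False] by (rule represents_cong) (simp add: False)
  qed
next
  case (And x y)
  show ?case
  proof (cases b)
    case True
    from represents_conj[OF And.IH[of b]] show ?thesis
      unfolding chains_of.simps if_P[OF True] by (rule represents_cong) (simp add: True)
  next
    case False
    from represents_disj[OF And.IH[of b]] show ?thesis
      unfolding chains_of.simps if_not_P[OF False] by (rule represents_cong) (simp add: False)
  qed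
next
  case (Next x)
  from represents_next[OF Next.IH[of b]] show ?case
    unfolding chains_of.simps by (rule represents_cong) (auto simp: next_rel_def)
next
  case (Until x y)
  show ?case
  proof (cases b)
    case True
    from represents_wuntil_chains[OF Until.IH[of True]] show ?thesis
      unfolding chains_of.simps if_P[OF True] by (rule represents_cong) (simp add: True wuntil_rel_def)
  next
    case False
    from represents_wuntil_chains[OF Until.IH(2)[of False] represents_conj[OF Until.IH[of False]]] show ?thesis
      unfolding chains_of.simps if_not_P[OF False]
      by (rule represents_cong) (simp only: False eq_False not_sat_fin_Until)
  qed
next
  case (Release x y)
  show ?case
  proof (cases b)
    case True
    from represents_wuntil_chains[OF Release.IH(2)[of True] represents_conj[OF Release.IH[of True]]] show ?thesis
      unfolding chains_of.simps if_P[OF True] by (rule represents_cong) (auto simp: True wuntil_rel_def)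
  next
    case False
    from represents_wuntil_chains[OF Release.IH[of False]] show ?thesis
      unfolding chains_of.simps if_not_P[OF False]
      by (rule represents_cong) (simp only: False eq_False not_sat_fin_Release)
  qed
qed

definition ex_prefix_formula :: "'a ltl \<Rightarrow> 'a ltl" where
  "ex_prefix_formula \<psi> = some_end_formula (chains_of True \<psi>)"

lemma cosafe_ex_prefix_formula: "cosafe (ex_prefix_formula \<psi>)"
  unfolding ex_prefix_formula_def by (rule cosafe_some_end_formula[OF represents_chains_of])

lemma sat_inf_ex_prefix_formula: "sat_inf w (ex_prefix_formula \<psi>) z \<longleftrightarrow> (\<exists>m \<ge> z. sat_fin w m \<psi> z)"
  unfolding ex_prefix_formula_def using sat_inf_some_end_formula[OF represents_chains_of[of True]] by simp

definition some_child :: "nat list set \<Rightarrow> nat list \<Rightarrow> nat list" where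
  "some_child D v = v @ [SOME k. v @ [k] \<in> D]"

lemma some_child_in: "is_tree D \<Longrightarrow> v \<in> D \<Longrightarrow> some_child D v \<in> D"
  unfolding some_child_def is_tree_def by (metis (mono_tags, lifting) Collect_empty_eq someI_ex)

lemma root_path_extend:
  assumes "is_tree D" and "root_path D \<pi> (enat (Suc m))"
  shows "\<exists>\<pi>'. root_path D \<pi>' \<infinity> \<and> (\<forall>k \<le> m. \<pi>' k = \<pi> k)"
proof -
  define \<pi>' where "\<pi>' k = (if k \<le> m then \<pi> k else (some_child D ^^ (k - m)) (\<pi> m))" for k
  have "\<pi> m \<in> D" using assms(2) unfolding root_path_def by simp
  then have "(some_child D ^^ j) (\<pi> m) \<in> D" for j
    by (induction j) (auto intro: some_child_in[OF assms(1)])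
  then have "\<pi>' k \<in> D" for k using assms(2) unfolding \<pi>'_def root_path_def by auto
  moreover have "\<exists>x. \<pi>' (Suc k) = \<pi>' k @ [x]" for k
  proof (cases "Suc k \<le> m")
    case True
    then show ?thesis using assms(2) unfolding root_path_def \<pi>'_def by simp
  next
    case False
    then have "\<pi>' (Suc k) = some_child D (\<pi>' k)"
      unfolding \<pi>'_def by (cases "k = m") (auto simp: Suc_diff_le)
    then show ?thesis unfolding some_child_def by blast
  qed
  moreover have "\<pi>' 0 = []" using assms(2) unfolding \<pi>'_def root_path_def by simp
  ultimately show ?thesis unfolding root_path_def by (intro exI[of _ \<pi>']) (auto simp: \<pi>'_def)
qed

lemma root_path_prefix: "root_path D \<pi> \<infinity> \<Longrightarrow> root_path D \<pi> (enat (Suc m))"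
  unfolding root_path_def by (auto simp: one_enat_def)

lemma EF_sat_iff:
  assumes "is_tree D"
  shows "EF_sat D lab u \<psi> \<longleftrightarrow>
    (\<exists>\<pi> i. root_path D \<pi> \<infinity> \<and> \<pi> i = u \<and> (\<exists>m \<ge> i. sat_fin (\<lambda>k. lab (\<pi> k)) m \<psi> i))"
proof
  assume "EF_sat D lab u \<psi>"
  then obtain \<pi> m i where path: "root_path D \<pi> (enat (Suc m))" and "i \<le> m" "\<pi> i = u"
    and "sat_fin (\<lambda>k. lab (\<pi> k)) m \<psi> i"
    unfolding EF_sat_def holds_finite_iff_sat_fin[symmetric] by (metis less_Suc_eq_le not0_implies_Suc not_less0)
  moreover obtain \<pi>' where "root_path D \<pi>' \<infinity>" and "\<forall>k \<le> m. \<pi>' k = \<pi> k"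
    using root_path_extend[OF assms path] by blast
  ultimately show "\<exists>\<pi> i. root_path D \<pi> \<infinity> \<and> \<pi> i = u \<and> (\<exists>m \<ge> i. sat_fin (\<lambda>k. lab (\<pi> k)) m \<psi> i)"
    using sat_fin_cong[of i m "\<lambda>k. lab (\<pi> k)" "\<lambda>k. lab (\<pi>' k)" \<psi>] by (intro exI[of _ \<pi>'] exI[of _ i]) auto
next
  assume "\<exists>\<pi> i. root_path D \<pi> \<infinity> \<and> \<pi> i = u \<and> (\<exists>m \<ge> i. sat_fin (\<lambda>k. lab (\<pi> k)) m \<psi> i)"
  then show "EF_sat D lab u \<psi>"
    unfolding EF_sat_def using root_path_prefix holds_finite_iff_sat_fin by (metis le_imp_less_Suc)
qed

lemma E_sat_iff:
  "E_sat D lab u \<phi> \<longleftrightarrow> (\<exists>\<pi> i. root_path D \<pi> \<infinity> \<and> \<pi> i = u \<and> sat_inf (\<lambda>k. lab (\<pi> k)) \<phi> i)"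
  unfolding E_sat_def holds_infinity_iff_sat_inf ..

theorem lemma3p6:
  fixes \<psi> :: "('a::finite) ltl"
  shows "\<exists>\<psi>'. cosafe \<psi>' \<and>
           (\<forall>D (lab :: nat list \<Rightarrow> 'a set) u. is_tree D \<and> u \<in> D \<longrightarrow>
              (EF_sat D lab u \<psi> \<longleftrightarrow> E_sat D lab u \<psi>'))"
proof (intro exI conjI allI impI)
  show "cosafe (ex_prefix_formula \<psi>)" by (rule cosafe_ex_prefix_formula)
  fix D and lab :: "nat list \<Rightarrow> 'a set" and u
  assume "is_tree D \<and> u \<in> D"
  then show "EF_sat D lab u \<psi> \<longleftrightarrow> E_sat D lab u (ex_prefix_formula \<psi>)"
    by (simp add: EF_sat_iff E_sat_iff sat_inf_ex_prefix_formula)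
qed

end
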